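(* The assignment $\sigma:\mathcal W\to\mathfrak V$, $R_{\mathbf i}\mapsto S_{(\mathbf i,\mathbf m)}$, is a well-defined bijection (not necessarily a monoid homomorphism).
   Context: $I$ countable, $A=(a_{ij})$ a Borcherds–Cartan matrix ($a_{ii}=2$ or $a_{ii}\in\mathbb Z_{\le0}$; $a_{ij}\in\mathbb Z_{\le0}$ for $i\ne j$; $a_{ij}=0\iff a_{ji}=0$), $I^{re}=\{a_{ii}=2\}$, $I^{im}=I\setminus I^{re}$, with datum $(A,\{\alpha_i\},\{\alpha_i^\vee\},P,P^\vee)$, $\alpha_i^\vee(\alpha_j)=a_{ij}$, and $r_i\in GL(\mathfrak h^* )$, $r_i(\mu)=\mu-\alpha_i^\vee(\mu)\alpha_i$. The monoid $\mathcal W$ is generated by symbols $r_i$ ($i\in I$) subject to: $r_i^2=1$ for $i\in I^{re}$; $(r_ir_j)^m=(r_jr_i)^m=1$ for $i\neq j$ in $I^{re}$ when the order of $r_ir_j$ in $GL(\mathfrak h^* )$ is $m\in\{2,3,4,6\}$; $r_ir_j=r_jr_i$ for $i\in I^{im}$, $j\in I\setminus\{i\}$ with $a_{ij}=0$. For a finite sequence $\mathbf i=(i_k,\ldots,i_1)$ in $I$, $R_{\mathbf i}=r_{i_k}\cdots r_{i_1}\in\mathcal W$. Let $\tilde I=\{(i,1)\}_{i\in I^{re}}\sqcup\{(i,m)\}_{i\in I^{im},m\in\mathbb Z_{\ge1}}$ and $\mathfrak W$ the Coxeter group with generators $s_{(i,m)}$, $(i,m)\in\tilde I$, and Coxeter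 matrix $x_{(i,m),(i,m)}=1$; $x_{(i,1),(j,1)}$ = order of $r_ir_j$ in $GL(\mathfrak h^* )$ for $i,j\in I^{re}$; and for $i\in I^{im}$, $m\ge1$ and $(j,n)\ne(i,m)$: $x_{(i,m),(j,n)}=x_{(j,n),(i,m)}=2$ if $a_{ij}=0$ and $\infty$ otherwise. For $\mathbf i=(i_k,\dots,i_1)$, the ordered index $(\mathbf i,\mathbf m)$ has $\mathbf m=(m_k,\ldots,m_1)$ with $m_s=1$ if $i_s\in I^{re}$ and $m_s=\#\{1\le t\le s:i_t=i_s\}$ if $i_s\in I^{im}$; $S_{(\mathbf i,\mathbf m)}=s_{(i_k,m_k)}\cdots s_{(i_1,m_1)}\in\mathfrak W$, and $\mathfrak V=\{S_{(\mathbf i,\mathbf m)}:\mathbf i\text{ a finite sequence in }I\}\subset\mathfrak W$. *)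

theory Defs
  imports Main "HOL-Library.Extended_Nat" "HOL-Library.Countable"
begin

definition borcherds_cartan :: "('i \<Rightarrow> 'i \<Rightarrow> int) \<Rightarrow> bool" where
  "borcherds_cartan A \<longleftrightarrow>
     (\<forall>i. A i i = 2 \<or> A i i \<le> 0) \<and>
     (\<forall>i j. i \<noteq> j \<longrightarrow> A i j \<le> 0) \<and>
     (\<forall>i j. A i j = 0 \<longleftrightarrow> A j i = 0)"

definition re_idx :: "('i \<Rightarrow> 'i \<Rightarrow> int) \<Rightarrow> 'i set" where
  "re_idx A = {i. A i i = 2}"

definition srefl :: "(complex \<Rightarrow> 'v \<Rightarrow> 'v::ab_group_add) \<Rightarrow> ('i \<Rightarrow> 'v) \<Rightarrow> ('i \<Rightarrow> 'v \<Rightarrow> complex)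
    \<Rightarrow> 'i \<Rightarrow> 'v \<Rightarrow> 'v" where
  "srefl scale alpha coroot i mu = mu - scale (coroot i mu) (alpha i)"

definition map_order :: "('v \<Rightarrow> 'v) \<Rightarrow> enat" where
  "map_order f = (if \<exists>m>0. (f ^^ m) = id then enat (LEAST m. m > 0 \<and> (f ^^ m) = id) else \<infinity>)"

definition rr_order :: "(complex \<Rightarrow> 'v \<Rightarrow> 'v::ab_group_add) \<Rightarrow> ('i \<Rightarrow> 'v) \<Rightarrow> ('i \<Rightarrow> 'v \<Rightarrow> complex)
    \<Rightarrow> 'i \<Rightarrow> 'i \<Rightarrow> enat" where
  "rr_order scale alpha coroot i j = map_order (srefl scale alpha coroot i \<circ> srefl scale alpha coroot j)"

inductive cong_cl :: "('a list \<Rightarrow> 'a list \<Rightarrow> bool) \<Rightarrow> 'a list \<Rightarrow> 'a list \<Rightarrow> bool" for R where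
  base: "R u v \<Longrightarrow> cong_cl R (xs @ u @ ys) (xs @ v @ ys)"
| refl: "cong_cl R u u"
| sym: "cong_cl R u v \<Longrightarrow> cong_cl R v u"
| trans: "cong_cl R u v \<Longrightarrow> cong_cl R v w \<Longrightarrow> cong_cl R u w"

text \<open>A word [i_k, ..., i_1] stands for r_{i_k} ... r_{i_1}.\<close>
definition W_rel :: "('i \<Rightarrow> 'i \<Rightarrow> int) \<Rightarrow> ('i \<Rightarrow> 'i \<Rightarrow> enat) \<Rightarrow> 'i list \<Rightarrow> 'i list \<Rightarrow> bool" where
  "W_rel A ord u v \<longleftrightarrow>
     (\<exists>i. A i i = 2 \<and> u = [i, i] \<and> v = []) \<or>
     (\<exists>i j m. i \<noteq> j \<and> A i i = 2 \<and> A j j = 2 \<and> ord i j = enat m \<and> m \<in> {2, 3, 4, 6} \<and>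
        (u = concat (replicate m [i, j]) \<or> u = concat (replicate m [j, i])) \<and> v = []) \<or>
     (\<exists>i j. A i i \<noteq> 2 \<and> j \<noteq> i \<and> A i j = 0 \<and>
        ((u = [i, j] \<and> v = [j, i]) \<or> (u = [j, i] \<and> v = [i, j])))"

definition W_class :: "('i \<Rightarrow> 'i \<Rightarrow> int) \<Rightarrow> ('i \<Rightarrow> 'i \<Rightarrow> enat) \<Rightarrow> 'i list \<Rightarrow> 'i list set" where
  "W_class A ord xs = {ys. cong_cl (W_rel A ord) xs ys}"

definition W_monoid :: "('i \<Rightarrow> 'i \<Rightarrow> int) \<Rightarrow> ('i \<Rightarrow> 'i \<Rightarrow> enat) \<Rightarrow> 'i list set set" where
  "W_monoid A ord = range (W_class A ord)"

definition tilde_I :: "('i \<Rightarrow> 'i \<Rightarrow> int) \<Rightarrow> ('i \<times> nat) set" where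
  "tilde_I A = {(i, 1) | i. A i i = 2} \<union> {(i, m) | i m. A i i \<noteq> 2 \<and> m \<ge> 1}"

definition cox_mat :: "('i \<Rightarrow> 'i \<Rightarrow> int) \<Rightarrow> ('i \<Rightarrow> 'i \<Rightarrow> enat) \<Rightarrow> ('i \<times> nat) \<Rightarrow> ('i \<times> nat) \<Rightarrow> enat" where
  "cox_mat A ord a b =
     (if a = b then 1
      else if A (fst a) (fst a) = 2 \<and> A (fst b) (fst b) = 2 then ord (fst a) (fst b)
      else if A (fst a) (fst a) \<noteq> 2 then (if A (fst a) (fst b) = 0 then 2 else \<infinity>)
      else (if A (fst b) (fst a) = 0 then 2 else \<infinity>))"

text \<open>Coxeter presentation: (s_a s_b)^{x_{ab}} = 1 whenever x_{ab} is finite (includes s_a^2 = 1).\<close>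
definition C_rel :: "('i \<Rightarrow> 'i \<Rightarrow> int) \<Rightarrow> ('i \<Rightarrow> 'i \<Rightarrow> enat) \<Rightarrow> ('i \<times> nat) list \<Rightarrow> ('i \<times> nat) list \<Rightarrow> bool" where
  "C_rel A ord u v \<longleftrightarrow>
     (\<exists>a b k. a \<in> tilde_I A \<and> b \<in> tilde_I A \<and> cox_mat A ord a b = enat k \<and>
        u = concat (replicate k [a, b]) \<and> v = [])"

definition C_class :: "('i \<Rightarrow> 'i \<Rightarrow> int) \<Rightarrow> ('i \<Rightarrow> 'i \<Rightarrow> enat) \<Rightarrow> ('i \<times> nat) list \<Rightarrow> ('i \<times> nat) list set" where
  "C_class A ord ws = {vs. vs \<in> lists (tilde_I A) \<and> cong_cl (C_rel A ord) ws vs}"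

definition cox_group :: "('i \<Rightarrow> 'i \<Rightarrow> int) \<Rightarrow> ('i \<Rightarrow> 'i \<Rightarrow> enat) \<Rightarrow> ('i \<times> nat) list set set" where
  "cox_group A ord = C_class A ord ` lists (tilde_I A)"

text \<open>For xs = [i_k, ..., i_1], position p (0-based from the left) is s = k - p;
  m_s = 1 for real i_s, otherwise the number of occurrences of i_s among i_s, ..., i_1.\<close>
definition ordered_index :: "('i \<Rightarrow> 'i \<Rightarrow> int) \<Rightarrow> 'i list \<Rightarrow> ('i \<times> nat) list" where
  "ordered_index A xs =
     map (\<lambda>p. (xs ! p, if A (xs ! p) (xs ! p) = 2 then 1 else count_list (drop p xs) (xs ! p)))
         [0..<length xs]"

definition V_set :: "('i \<Rightarrow> 'i \<Rightarrow> int) \<Rightarrow> ('i \<Rightarrow> 'i \<Rightarrow> enat) \<Rightarrow> ('i \<times> nat) list set set" where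
  "V_set A ord = {C_class A ord (ordered_index A xs) | xs. True}"

end

theory Submission
  imports Defs "HOL-Library.Function_Algebras"
begin

text \<open>
  The ordered index labels every imaginary letter of a word by its number of occurrences counted
  from the right. Each defining relation of \<open>\<W>\<close> is mapped to a relation of the Coxeter group
  \<open>\<frakW>\<close> (a commutation of an imaginary \<open>i\<close> with \<open>j\<close>, \<open>a\<^sub>i\<^sub>j = 0\<close>, to a commutation of
  \<open>(i, m)\<close> and \<open>(j, n)\<close>), and the labels outside the relation do not change, since relations
  preserve the number of imaginary letters; so \<open>\<sigma>\<close> is well defined, and it is onto \<open>\<frakV>\<close> by
  definition.

  For injectivity, note that an ordered index contains every imaginary generator at most once.
  By the exchange condition and Matsumoto's theorem, two such words representing the same element
  of \<open>\<frakW>\<close> are connected by braid moves and cancellations \<open>s s = 1\<close> of real generators only: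
  an imaginary generator cannot be cancelled, because braid moves involving it are commutations
  and preserve its number of occurrences. Forgetting labels, all these moves are relations of
  \<open>\<W>\<close>. The Coxeter theory requires the dihedral subgroups of \<open>\<frakW>\<close> to have the prescribed
  orders; this is checked on the reflection representation on \<open>\<frakh>\<^sup>*\<close> for pairs of real
  generators, and on an explicit geometric representation otherwise.
\<close>

fun alt_word :: "nat \<Rightarrow> 'a \<Rightarrow> 'a \<Rightarrow> 'a list" where
  "alt_word 0 a b = []"
| "alt_word (Suc n) a b = a # alt_word n b a"

lemma length_alt_word [simp]: "length (alt_word n a b) = n"
  by (induction n arbitrary: a b) auto

lemma alt_word_add:
  "alt_word (n + k) a b = alt_word n a b @ (if even n then alt_word k a b else alt_word k b a)"
  by (induction n arbitrary: a b) auto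

lemma alt_word_Suc_snoc: "alt_word (Suc n) a b = alt_word n a b @ [if even n then a else b]"
  using alt_word_add[of n 1 a b] by auto

lemma rev_alt_word: "rev (alt_word n a b) = (if even n then alt_word n b a else alt_word n a b)"
proof (induction n arbitrary: a b)
  case (Suc n)
  show ?case
    using Suc[of b a] Suc[of a b] alt_word_Suc_snoc[of n a b] alt_word_Suc_snoc[of n b a]
    by (auto simp: alt_word_Suc_snoc)
qed simp

lemma alt_word_double: "alt_word (2 * n) a b = alt_word n a b @ rev (alt_word n b a)"
  using alt_word_add[of n n a b] by (simp add: rev_alt_word mult_2)

lemma concat_replicate_eq_alt_word: "concat (replicate k [a, b]) = alt_word (2 * k) a b"
  by (induction k) auto

lemma set_alt_word: "set (alt_word n a b) \<subseteq> {a, b}"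
  by (induction n arbitrary: a b) auto

lemma map_alt_word: "map f (alt_word n a b) = alt_word n (f a) (f b)"
  by (induction n arbitrary: a b) auto

lemma count_alt_word_fst: "a \<noteq> b \<Longrightarrow> count_list (alt_word n a b) a = (n + 1) div 2"
  and count_alt_word_snd: "a \<noteq> b \<Longrightarrow> count_list (alt_word n a b) b = n div 2"
proof (induction n arbitrary: a b)
  case 0
  { case 1 then show ?case by simp }
  { case 2 then show ?case by simp }
next
  case (Suc n)
  { case 1 then show ?case using Suc(2)[of b a] by auto }
  { case 2 then show ?case using Suc(1)[of b a] by auto }
qed

lemma count_alt_word_other: "c \<noteq> a \<Longrightarrow> c \<noteq> b \<Longrightarrow> count_list (alt_word n a b) c = 0"
  by (induction n arbitrary: a b) auto

lemma cong_cl_rel: "R u v \<Longrightarrow> cong_cl R u v"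
  using cong_cl.base[of R u v "[]" "[]"] by simp

lemma cong_cl_ctx: "cong_cl R u v \<Longrightarrow> cong_cl R (x @ u @ y) (x @ v @ y)"
proof (induction rule: cong_cl.induct)
  case (base u v xs ys)
  then show ?case using cong_cl.base[of R u v "x @ xs" "ys @ y"] by simp
qed (auto intro: cong_cl.intros)

lemma cong_cl_append: "cong_cl R u v \<Longrightarrow> cong_cl R u' v' \<Longrightarrow> cong_cl R (u @ u') (v @ v')"
  using cong_cl_ctx[of R u v "[]" u'] cong_cl_ctx[of R u' v' v "[]"]
  by (auto intro: cong_cl.trans)

lemma cong_cl_Cons: "cong_cl R u v \<Longrightarrow> cong_cl R (s # u) (s # v)"
  using cong_cl_ctx[of R u v "[s]" "[]"] by simp

lemma cong_cl_map:
  "cong_cl R u v \<Longrightarrow> (\<And>u v. R u v \<Longrightarrow> cong_cl R' (map f u) (map f v))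
    \<Longrightarrow> cong_cl R' (map f u) (map f v)"
  by (induction rule: cong_cl.induct) (auto simp: cong_cl_ctx intro: cong_cl.intros)

lemma cong_cl_mono: "cong_cl R u v \<Longrightarrow> (\<And>u v. R u v \<Longrightarrow> cong_cl R' u v) \<Longrightarrow> cong_cl R' u v"
  using cong_cl_map[of R u v R' id] by simp

lemma cong_cl_word_rev:
  "(\<And>x. x \<in> set w \<Longrightarrow> cong_cl R [x, x] []) \<Longrightarrow> cong_cl R (w @ rev w) []"
proof (induction w)
  case (Cons s w)
  then have "cong_cl R ([s] @ (w @ rev w) @ [s]) ([s] @ [] @ [s])"
    by (intro cong_cl_ctx) auto
  moreover have "cong_cl R [s, s] []" using Cons.prems by auto
  ultimately show ?case by (auto intro: cong_cl.trans)
qed (simp add: cong_cl.refl)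

lemma cong_cl_braid:
  assumes "cong_cl R [i, i] []" and "cong_cl R [j, j] []" and "cong_cl R (alt_word (2 * n) i j) []"
  shows "cong_cl R (alt_word n i j) (alt_word n j i)"
proof -
  let ?u = "alt_word n i j" and ?v = "alt_word n j i"
  have "cong_cl R (rev ?v @ rev (rev ?v)) []"
    using set_alt_word[of n j i] assms(1,2) by (intro cong_cl_word_rev) auto
  then have "cong_cl R (?u @ (rev ?v @ ?v)) (?u @ [])"
    by (intro cong_cl_append cong_cl.refl) simp
  moreover have "cong_cl R ((?u @ rev ?v) @ ?v) ([] @ ?v)"
    using assms(3) by (intro cong_cl_append cong_cl.refl) (simp add: alt_word_double)
  ultimately show ?thesis by (metis append.assoc append_Nil append_Nil2 cong_cl.sym cong_cl.trans)
qed

lemma split_at_two_positions: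
  assumes "i < j" "j < length w"
  shows "\<exists>x s y s' z. w = x @ s # y @ s' # z \<and> length x = i \<and> length y = j - i - 1"
proof -
  let ?r = "drop (Suc i) w"
  have "w = take i w @ w ! i # ?r" using id_take_nth_drop[of i w] assms by simp
  moreover have "?r = take (j - i - 1) ?r @ ?r ! (j - i - 1) # drop (Suc (j - i - 1)) ?r"
    using id_take_nth_drop[of "j - i - 1" ?r] assms by simp
  ultimately have "w = take i w @ w ! i # take (j - i - 1) ?r @ ?r ! (j - i - 1) # drop (Suc (j - i - 1)) ?r"
    by metis
  moreover have "length (take i w) = i" "length (take (j - i - 1) ?r) = j - i - 1" using assms by auto
  ultimately show ?thesis by blast
qed

section \<open>Coxeter systems\<close>

definition coxeter_rel :: "'g set \<Rightarrow> ('g \<Rightarrow> 'g \<Rightarrow> enat) \<Rightarrow> 'g list \<Rightarrow> 'g list \<Rightarrow> bool" where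
  "coxeter_rel S m u v \<longleftrightarrow> (\<exists>a b k. a \<in> S \<and> b \<in> S \<and> m a b = enat k \<and>
        u = concat (replicate k [a, b]) \<and> v = [])"

text \<open>The last axiom says that \<open>s\<^sub>a s\<^sub>b\<close> has order exactly \<open>m a b\<close> in the group presented; it holds
  for every Coxeter matrix, but is only established below for the matrices at hand.\<close>
locale coxeter_system =
  fixes S :: "'g set" and m :: "'g \<Rightarrow> 'g \<Rightarrow> enat"
  assumes m_diag: "a \<in> S \<Longrightarrow> m a a = 1"
    and m_sym: "a \<in> S \<Longrightarrow> b \<in> S \<Longrightarrow> m a b = m b a"
    and m_ge2: "a \<in> S \<Longrightarrow> b \<in> S \<Longrightarrow> a \<noteq> b \<Longrightarrow> 2 \<le> m a b"
    and alt_word_nontrivial: "a \<in> S \<Longrightarrow> b \<in> S \<Longrightarrow> a \<noteq> b \<Longrightarrow> 0 < d \<Longrightarrow> enat d < m a b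
        \<Longrightarrow> \<not> cong_cl (coxeter_rel S m) (alt_word (2 * d) a b) []"
begin

abbreviation cox_eq :: "'g list \<Rightarrow> 'g list \<Rightarrow> bool" where
  "cox_eq \<equiv> cong_cl (coxeter_rel S m)"

lemma cox_eq_lists_iff: "cox_eq u v \<Longrightarrow> u \<in> lists S \<longleftrightarrow> v \<in> lists S"
proof (induction rule: cong_cl.induct)
  case (base u v xs ys)
  then obtain a b k where "a \<in> S" "b \<in> S" "u = alt_word (2 * k) a b" "v = []"
    unfolding coxeter_rel_def by (auto simp: concat_replicate_eq_alt_word)
  then show ?case using set_alt_word[of "2 * k" a b] by auto
qed auto

lemma cox_eq_alt_word: "a \<in> S \<Longrightarrow> b \<in> S \<Longrightarrow> m a b = enat k \<Longrightarrow> cox_eq (alt_word (2 * k) a b) []"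
  by (rule cong_cl_rel) (auto simp: coxeter_rel_def concat_replicate_eq_alt_word)

lemma cox_eq_square: "s \<in> S \<Longrightarrow> cox_eq [s, s] []"
  using cox_eq_alt_word[of s s 1] m_diag[of s] by (simp add: one_enat_def numeral_2_eq_2)

lemma cox_eq_square_ctx: "s \<in> S \<Longrightarrow> cox_eq (x @ s # s # y) (x @ y)"
  using cong_cl_ctx[OF cox_eq_square[of s], of x y] by simp

lemma cox_eq_word_rev: "w \<in> lists S \<Longrightarrow> cox_eq (w @ rev w) []"
  by (intro cong_cl_word_rev cox_eq_square) auto

lemma cox_eq_rev_word: "w \<in> lists S \<Longrightarrow> cox_eq (rev w @ w) []"
  using cox_eq_word_rev[of "rev w"] by (simp add: in_lists_conv_set)

lemma cox_eq_braid: "a \<in> S \<Longrightarrow> b \<in> S \<Longrightarrow> m a b = enat n \<Longrightarrow> cox_eq (alt_word n a b) (alt_word n b a)"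
  by (intro cong_cl_braid cox_eq_square cox_eq_alt_word)

lemma cox_eq_cancel_left: "x \<in> lists S \<Longrightarrow> cox_eq (x @ u) (x @ v) \<Longrightarrow> cox_eq u v"
  using cong_cl_ctx[of _ "x @ u" "x @ v" "rev x" "[]"]
    cong_cl_ctx[OF cox_eq_rev_word, of x "[]" u] cong_cl_ctx[OF cox_eq_rev_word, of x "[]" v]
  by (metis append.assoc append_Nil append_Nil2 cong_cl.sym cong_cl.trans)

lemma cox_eq_cancel_right: "x \<in> lists S \<Longrightarrow> cox_eq (u @ x) (v @ x) \<Longrightarrow> cox_eq u v"
  using cong_cl_ctx[of _ "u @ x" "v @ x" "[]" "rev x"]
    cong_cl_ctx[OF cox_eq_word_rev, of x u "[]"] cong_cl_ctx[OF cox_eq_word_rev, of x v "[]"]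
  by (metis append.assoc append_Nil append_Nil2 cong_cl.sym cong_cl.trans)

lemma cox_eq_Nil_rev: "u \<in> lists S \<Longrightarrow> cox_eq u [] \<Longrightarrow> cox_eq (rev u) []"
  using cong_cl_ctx[of _ u "[]" "rev u" "[]"] cox_eq_rev_word[of u]
  by (metis append_Nil2 cong_cl.sym cong_cl.trans)

text \<open>The \<open>p\<close>-th entry of \<open>reflections w\<close> is the word \<open>x @ [s] @ rev x\<close>, where \<open>x @ [s]\<close> is the
  prefix of \<open>w\<close> of length \<open>p + 1\<close>.\<close>
fun reflections :: "'a list \<Rightarrow> 'a list list" where
  "reflections [] = []"
| "reflections (s # w) = [s] # map (\<lambda>r. s # r @ [s]) (reflections w)"

lemma length_reflections [simp]: "length (reflections w) = length w"
  by (induction w) auto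

lemma reflections_append: "reflections (x @ y) = reflections x @ map (\<lambda>r. x @ r @ rev x) (reflections y)"
  by (induction x) auto

lemma reflections_alt_word: "reflections (alt_word n a b) = map (\<lambda>l. alt_word (2 * l + 1) a b) [0..<n]"
proof (induction n arbitrary: a b)
  case (Suc n)
  have "a # alt_word (2 * l + 1) b a @ [a] = alt_word (2 * Suc l + 1) a b" for l
    using alt_word_Suc_snoc[of "2 * l + 1" b a] by simp
  moreover have "[0..<Suc n] = 0 # map Suc [0..<n]" by (simp add: map_Suc_upt upt_conv_Cons)
  ultimately show ?case using Suc[of b a] by simp
qed simp

lemma reflections_nth_length: "reflections (x @ s # r) ! length x = x @ [s] @ rev x"
  by (simp add: reflections_append nth_append)

definition refl_count :: "'g list \<Rightarrow> 'g list \<Rightarrow> nat" where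
  "refl_count w t = length (filter (\<lambda>r. cox_eq r t) (reflections w))"

text \<open>Inserting \<open>(ab)\<^sup>k\<close> adds its \<open>2k\<close> reflections, which repeat with period \<open>k\<close>.\<close>
lemma refl_count_insert_relator:
  assumes ab: "a \<in> S" "b \<in> S" "m a b = enat k" and xs: "xs \<in> lists S"
  shows "refl_count (xs @ alt_word (2 * k) a b @ ys) t = refl_count (xs @ ys) t +
     2 * length (filter (\<lambda>l. cox_eq (xs @ alt_word (2 * l + 1) a b @ rev xs) t) [0..<k])"
proof -
  let ?u = "alt_word (2 * k) a b"
  let ?P = "\<lambda>r. cox_eq r t"
  let ?Q = "\<lambda>l. cox_eq (xs @ alt_word (2 * l + 1) a b @ rev xs) t"
  have u: "cox_eq ?u []" using cox_eq_alt_word[OF ab] .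
  have rev_u: "cox_eq (rev ?u) []"
    using cox_eq_Nil_rev[OF _ u] set_alt_word[of "2 * k" a b] ab by auto
  have conj_u: "?P (xs @ ?u @ r @ rev ?u @ rev xs) \<longleftrightarrow> ?P (xs @ r @ rev xs)" for r
  proof -
    have "cox_eq (?u @ r @ rev ?u) ([] @ r @ [])"
      using cong_cl_append[OF u cong_cl_append[OF cong_cl.refl rev_u]] by simp
    then have "cox_eq (xs @ ?u @ r @ rev ?u @ rev xs) (xs @ r @ rev xs)"
      using cong_cl_ctx[of _ "?u @ r @ rev ?u" "[] @ r @ []" xs "rev xs"] by simp
    then show ?thesis by (meson cong_cl.sym cong_cl.trans)
  qed
  have period: "?Q (l + k) \<longleftrightarrow> ?Q l" for l
  proof -
    have "alt_word (2 * (l + k) + 1) a b = ?u @ alt_word (2 * l + 1) a b"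
      using alt_word_add[of "2 * k" "2 * l + 1" a b] by (simp add: algebra_simps)
    then have "cox_eq (xs @ alt_word (2 * (l + k) + 1) a b @ rev xs) (xs @ alt_word (2 * l + 1) a b @ rev xs)"
      using cong_cl_ctx[OF cong_cl_append[OF u cong_cl.refl], of xs "alt_word (2 * l + 1) a b" "rev xs"]
      by simp
    then show ?thesis by (meson cong_cl.sym cong_cl.trans)
  qed
  have "[0..<2 * k] = [0..<k] @ map (\<lambda>l. l + k) [0..<k]"
    by (metis map_add_upt mult_2 upt_add_eq_append zero_le)
  then have "length (filter ?Q [0..<2 * k]) = 2 * length (filter ?Q [0..<k])"
    using period by (simp add: filter_map comp_def cong: filter_cong)
  then show ?thesis
    unfolding refl_count_def
    by (simp add: reflections_append reflections_alt_word filter_map comp_def conj_u)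
qed

lemma even_refl_count_cong:
  "cox_eq w w' \<Longrightarrow> w \<in> lists S \<Longrightarrow> even (refl_count w t) = even (refl_count w' t)"
proof (induction rule: cong_cl.induct)
  case (base u v xs ys)
  from base(1) obtain a b k where "a \<in> S" "b \<in> S" "m a b = enat k" "u = alt_word (2 * k) a b" "v = []"
    unfolding coxeter_rel_def by (auto simp: concat_replicate_eq_alt_word)
  then show ?case using refl_count_insert_relator[of a b k xs ys t] base(2) by simp
qed (use cox_eq_lists_iff in metis)+

subsection \<open>Reduced words and the exchange condition\<close>

definition reduced :: "'g list \<Rightarrow> bool" where
  "reduced w \<longleftrightarrow> w \<in> lists S \<and> (\<forall>w'. cox_eq w w' \<longrightarrow> length w \<le> length w')"

lemma reduced_lists: "reduced w \<Longrightarrow> w \<in> lists S"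
  by (simp add: reduced_def)

lemma reduced_length_eq: "reduced u \<Longrightarrow> reduced v \<Longrightarrow> cox_eq u v \<Longrightarrow> length u = length v"
  unfolding reduced_def by (meson cong_cl.sym antisym)

lemma reduced_cox_eq: "reduced w \<Longrightarrow> cox_eq w x \<Longrightarrow> length x = length w \<Longrightarrow> reduced x"
  unfolding reduced_def using cox_eq_lists_iff by (metis cong_cl.trans)

lemma reduced_appendD:
  assumes r: "reduced (x @ y)"
  shows "reduced x \<and> reduced y"
proof -
  have "length x \<le> length x'" if "cox_eq x x'" for x'
    using r cong_cl_append[OF that cong_cl.refl[of _ y]] by (fastforce simp: reduced_def)
  moreover have "length y \<le> length y'" if "cox_eq y y'" for y'
    using r cong_cl_append[OF cong_cl.refl[of _ x] that] by (fastforce simp: reduced_def)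
  ultimately show ?thesis using r by (simp add: reduced_def)
qed

lemma cox_eq_swap: "cox_eq (s # y) (y @ [s']) \<Longrightarrow> cox_eq (y @ s' # z) (s # y @ z)"
  using cong_cl.sym[OF cong_cl_append[OF _ cong_cl.refl[of _ z]]] by fastforce

lemma cox_eq_delete_pair:
  assumes "x @ s # y @ s' # z \<in> lists S" and "cox_eq (s # y) (y @ [s'])"
  shows "cox_eq (x @ s # y @ s' # z) (x @ y @ z)"
proof -
  have "cox_eq ((s # y) @ s' # z) ((y @ [s']) @ s' # z)"
    using cong_cl_append[OF assms(2) cong_cl.refl] .
  moreover have "cox_eq (y @ s' # s' # z) (y @ z)" using cox_eq_square_ctx assms(1) by simp
  ultimately have "cox_eq (s # y @ s' # z) (y @ z)" by (auto intro: cong_cl.trans)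
  then show ?thesis using cong_cl_ctx[of _ "s # y @ s' # z" "y @ z" x "[]"] by simp
qed

lemma cox_eq_conj_iff: "x \<in> lists S \<Longrightarrow> cox_eq (x @ u @ rev x) (x @ v @ rev x) \<longleftrightarrow> cox_eq u v"
proof
  assume xS: "x \<in> lists S" and "cox_eq (x @ u @ rev x) (x @ v @ rev x)"
  then have "cox_eq (u @ rev x) (v @ rev x)" by (rule cox_eq_cancel_left)
  then show "cox_eq u v"
    by (rule cox_eq_cancel_right[rotated]) (use xS in \<open>simp add: in_lists_conv_set\<close>)
qed (rule cong_cl_ctx)

lemma cox_eq_swap_iff:
  assumes sS: "s \<in> S" and s'S: "s' \<in> S" and yS: "y \<in> lists S"
  shows "cox_eq [s] (s # y @ [s'] @ rev y @ [s]) \<longleftrightarrow> cox_eq (s # y) (y @ [s'])"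
proof
  assume "cox_eq [s] (s # y @ [s'] @ rev y @ [s])"
  then have one: "cox_eq [] (y @ [s'] @ rev y @ [s])"
    using cox_eq_cancel_left[of "[s]" "[]"] sS by simp
  have "cox_eq ([] @ s # y) ((y @ [s'] @ rev y @ [s]) @ s # y)"
    using cong_cl_append[OF one cong_cl.refl] .
  moreover have "cox_eq (y @ [s'] @ rev y @ [s, s] @ y) (y @ [s'] @ rev y @ y)"
    using cong_cl_ctx[OF cox_eq_square[OF sS], of "y @ [s'] @ rev y" y] by simp
  moreover have "cox_eq (y @ [s'] @ (rev y @ y)) (y @ [s'] @ [])"
    using cong_cl_ctx[OF cox_eq_rev_word[OF yS], of "y @ [s']" "[]"] by simp
  ultimately show "cox_eq (s # y) (y @ [s'])" by (auto intro: cong_cl.trans)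
next
  assume e: "cox_eq (s # y) (y @ [s'])"
  have "cox_eq ((s # y) @ [s'] @ rev y @ [s]) ((y @ [s']) @ [s'] @ rev y @ [s])"
    using cong_cl_append[OF e cong_cl.refl] .
  moreover have "cox_eq (y @ [s', s'] @ rev y @ [s]) (y @ [] @ rev y @ [s])"
    using cong_cl_ctx[OF cox_eq_square[OF s'S], of y "rev y @ [s]"] by simp
  moreover have "cox_eq ((y @ rev y) @ [s]) ([] @ [s])"
    using cong_cl_append[OF cox_eq_word_rev[OF yS] cong_cl.refl] .
  ultimately have "cox_eq (s # y @ [s'] @ rev y @ [s]) [s]" by (auto intro: cong_cl.trans)
  then show "cox_eq [s] (s # y @ [s'] @ rev y @ [s])" by (rule cong_cl.sym)
qed

lemma reflections_eq_iff_swap: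
  assumes w: "x @ s # y @ s' # z \<in> lists S"
  shows "cox_eq (reflections (x @ s # y @ s' # z) ! length x)
                (reflections (x @ s # y @ s' # z) ! (length x + 1 + length y))
         \<longleftrightarrow> cox_eq (s # y) (y @ [s'])"
proof -
  have "reflections (x @ s # y @ s' # z) ! length x = x @ [s] @ rev x"
    using reflections_nth_length[of x s "y @ s' # z"] by simp
  moreover have "reflections (x @ s # y @ s' # z) ! (length x + 1 + length y)
        = x @ (s # y @ [s'] @ rev y @ [s]) @ rev x"
    using reflections_nth_length[of "x @ s # y" s' z] by simp
  ultimately show ?thesis
    using cox_eq_conj_iff[of x "[s]" "s # y @ [s'] @ rev y @ [s]"] cox_eq_swap_iff[of s s' y] w by simp
qed

text \<open>A reflection occurring exactly once among the reflections of \<open>w\<close> has odd count, so it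
  must also occur among the reflections of every \<open>w'\<close> equal to \<open>w\<close>.\<close>
lemma reduced_if_distinct_reflections:
  assumes w: "w \<in> lists S"
    and distinct: "\<And>i j. i < j \<Longrightarrow> j < length w \<Longrightarrow> \<not> cox_eq (reflections w ! i) (reflections w ! j)"
  shows "reduced w"
proof -
  have dist: "cox_eq (reflections w ! i) (reflections w ! j) \<Longrightarrow> i < length w \<Longrightarrow> j < length w \<Longrightarrow> i = j"
    for i j
    using distinct[of i j] distinct[of j i] cong_cl.sym by (metis linorder_neqE_nat)
  have "length w \<le> length w'" if ww: "cox_eq w w'" for w'
  proof -
    have "\<exists>j < length w'. cox_eq (reflections w' ! j) (reflections w ! i)" if i: "i < length w" for i
    proof -
      let ?t = "reflections w ! i"
      have "{j. j < length (reflections w) \<and> cox_eq (reflections w ! j) ?t} = {i}"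
        using dist i cong_cl.refl by auto
      then have "refl_count w ?t = 1" unfolding refl_count_def by (simp add: length_filter_conv_card)
      then have "refl_count w' ?t \<noteq> 0" using even_refl_count_cong[OF ww w, of ?t] by (metis even_zero odd_one)
      then obtain r where "r \<in> set (reflections w')" "cox_eq r ?t" unfolding refl_count_def
        by (metis filter_False length_0_conv)
      then show ?thesis by (metis in_set_conv_nth length_reflections)
    qed
    then obtain f where f: "\<And>i. i < length w \<Longrightarrow> f i < length w' \<and> cox_eq (reflections w' ! f i) (reflections w ! i)"
      by metis
    have "inj_on f {..<length w}"
      by (rule inj_onI) (use f dist in \<open>metis cong_cl.sym cong_cl.trans lessThan_iff\<close>)
    moreover have "f ` {..<length w} \<subseteq> {..<length w'}" using f by auto
    ultimately show ?thesis using card_inj_on_le[of f "{..<length w}" "{..<length w'}"] by simp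
  qed
  then show ?thesis using w by (simp add: reduced_def)
qed

lemma reduced_no_swap: "reduced (x @ s # y @ s' # z) \<Longrightarrow> \<not> cox_eq (s # y) (y @ [s'])"
  using cox_eq_delete_pair[of x s y s' z] reduced_lists unfolding reduced_def by fastforce

lemma reduced_if_no_swap:
  assumes w: "w \<in> lists S"
    and no_swap: "\<And>x s y s' z. w = x @ s # y @ s' # z \<Longrightarrow> \<not> cox_eq (s # y) (y @ [s'])"
  shows "reduced w"
proof (rule reduced_if_distinct_reflections[OF w])
  fix i j assume ij: "i < j" "j < length w"
  then obtain x s y s' z where d: "w = x @ s # y @ s' # z" "length x = i" "length y = j - i - 1"
    using split_at_two_positions by blast
  then show "\<not> cox_eq (reflections w ! i) (reflections w ! j)"
    using reflections_eq_iff_swap[of x s y s' z] w no_swap ij by auto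
qed

lemma exchange_condition:
  assumes r: "reduced w" and s: "s \<in> S" and nr: "\<not> reduced (s # w)"
  shows "\<exists>y s' z. w = y @ s' # z \<and> cox_eq (s # y) (y @ [s'])"
proof -
  have "s # w \<in> lists S" using r s reduced_lists by auto
  then obtain x t y t' z where d: "s # w = x @ t # y @ t' # z" and e: "cox_eq (t # y) (y @ [t'])"
    using reduced_if_no_swap nr by blast
  show ?thesis
  proof (cases x)
    case Nil then show ?thesis using d e by auto
  next
    case (Cons a x')
    then show ?thesis using reduced_no_swap[of x' t y t' z] r e d by auto
  qed
qed

lemma reduced_alt_word:
  assumes ab: "a \<in> S" "b \<in> S" "a \<noteq> b" and n: "enat n \<le> m a b"
  shows "reduced (alt_word n a b)"
proof (rule reduced_if_distinct_reflections)
  show "alt_word n a b \<in> lists S" using set_alt_word[of n a b] ab by auto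
next
  fix i j assume ij: "i < j" "j < length (alt_word n a b)"
  have "alt_word (2 * j + 1) a b = alt_word (2 * (j - i)) a b @ alt_word (2 * i + 1) a b"
    using alt_word_add[of "2 * (j - i)" "2 * i + 1" a b] ij by (simp add: algebra_simps)
  moreover have "alt_word (2 * i + 1) a b \<in> lists S" using set_alt_word[of "2 * i + 1" a b] ab by auto
  ultimately have "cox_eq (alt_word (2 * i + 1) a b) (alt_word (2 * j + 1) a b)
      \<Longrightarrow> cox_eq (alt_word (2 * (j - i)) a b) []"
    using cox_eq_cancel_right[of "alt_word (2 * i + 1) a b" "alt_word (2 * (j - i)) a b" "[]"] cong_cl.sym
    by auto
  moreover have "enat (j - i) < m a b" using ij n
    by (metis diff_le_self enat_ord_simps(2) le_less_trans length_alt_word order.strict_trans2)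
  ultimately show "\<not> cox_eq (reflections (alt_word n a b) ! i) (reflections (alt_word n a b) ! j)"
    using alt_word_nontrivial[OF ab, of "j - i"] ij by (auto simp: reflections_alt_word)
qed

subsection \<open>Matsumoto's theorem\<close>

definition braid_rel :: "'g list \<Rightarrow> 'g list \<Rightarrow> bool" where
  "braid_rel u v \<longleftrightarrow> (\<exists>a b n. a \<in> S \<and> b \<in> S \<and> a \<noteq> b \<and> m a b = enat n \<and>
     u = alt_word n a b \<and> v = alt_word n b a)"

abbreviation braid_eq :: "'g list \<Rightarrow> 'g list \<Rightarrow> bool" where
  "braid_eq \<equiv> cong_cl braid_rel"

lemma left_descent_not_reduced:
  assumes "cox_eq w (s # u)" "reduced (s # u)" "cox_eq w x" "reduced x"
  shows "\<not> reduced (s # x)"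
proof
  assume r: "reduced (s # x)"
  have sS: "s \<in> S" using reduced_lists[OF assms(2)] by simp
  have "cox_eq (s # x) (s # s # u)" using cong_cl_Cons assms(1,3) by (meson cong_cl.sym cong_cl.trans)
  then have "cox_eq (s # x) u" using cox_eq_square_ctx[OF sS, of "[]" u] by (auto intro: cong_cl.trans)
  moreover have "length x = length (s # u)" using reduced_length_eq assms by (meson cong_cl.sym cong_cl.trans)
  ultimately show False using r unfolding reduced_def by fastforce
qed

text \<open>The exchange condition for \<open>s\<close> deletes a letter of \<open>tst\<dots>y\<close>; it lies in \<open>y\<close>, since
  \<open>stst\<dots>\<close> of length \<open>j + 1 \<le> m s t\<close> is reduced.\<close>
lemma left_descent_alt_word_step:
  assumes w: "reduced w" and st: "s \<in> S" "t \<in> S"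
    and su: "cox_eq w (s # u)" "reduced (s # u)"
    and jy: "cox_eq w (alt_word j t s @ y)" "reduced (alt_word j t s @ y)"
    and jm: "s \<noteq> t" "enat (Suc j) \<le> m s t"
  shows "\<exists>z. cox_eq w (alt_word (Suc j) s t @ z) \<and> reduced (alt_word (Suc j) s t @ z)"
proof -
  let ?x = "alt_word j t s @ y"
  obtain y1 s' z1 where x: "?x = y1 @ s' # z1" and e: "cox_eq (s # y1) (y1 @ [s'])"
    using exchange_condition[OF jy(2) st(1) left_descent_not_reduced[OF su jy]] by blast
  have long: ?thesis if "alt_word j t s @ y1' = y1" "y = y1' @ s' # z1" for y1'
  proof -
    have "cox_eq ?x (s # y1 @ z1)" using cox_eq_swap[OF e] x by simp
    then have "cox_eq w (alt_word (Suc j) s t @ (y1' @ z1))" using jy(1) that cong_cl.trans by fastforce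
    moreover have "length (alt_word (Suc j) s t @ (y1' @ z1)) = length w"
      using reduced_length_eq[OF w jy(2) jy(1)] that by auto
    ultimately show ?thesis using reduced_cox_eq[OF w] by blast
  qed
  have short: False if "alt_word j t s = y1 @ s' # r" for r
  proof -
    have sS': "s' \<in> S" using x reduced_lists[OF jy(2)] by simp
    have "cox_eq ((s # y1) @ s' # r) ((y1 @ [s']) @ s' # r)" using cong_cl_append[OF e cong_cl.refl] .
    moreover have "cox_eq (y1 @ s' # s' # r) (y1 @ r)" using cox_eq_square_ctx[OF sS'] .
    ultimately have "cox_eq (alt_word (Suc j) s t) (y1 @ r)" using that by (auto intro: cong_cl.trans)
    moreover have "reduced (alt_word (Suc j) s t)" using reduced_alt_word[OF st jm] .
    moreover have "length (y1 @ r) < length (alt_word (Suc j) s t)"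
      using arg_cong[OF that, of length] by simp
    ultimately show False unfolding reduced_def by fastforce
  qed
  from x obtain us where
    "alt_word j t s = y1 @ us \<and> us @ y = s' # z1 \<or> alt_word j t s @ us = y1 \<and> y = us @ s' # z1"
    by (auto simp: append_eq_append_conv2)
  then show ?thesis
    using long short by (cases us) auto
qed

lemma two_left_descents:
  assumes w: "reduced w" and st: "s \<in> S" "t \<in> S" "s \<noteq> t"
    and su: "cox_eq w (s # u)" "reduced (s # u)"
    and tv: "cox_eq w (t # v)" "reduced (t # v)"
  shows "\<exists>n z. m s t = enat n \<and> cox_eq w (alt_word n s t @ z) \<and> reduced (alt_word n s t @ z)"
proof -
  have both: "(\<exists>z. cox_eq w (alt_word j s t @ z) \<and> reduced (alt_word j s t @ z)) \<and>
    (\<exists>z. cox_eq w (alt_word j t s @ z) \<and> reduced (alt_word j t s @ z))"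
    if "1 \<le> j" "enat j \<le> m s t" for j
    using that
  proof (induction j rule: dec_induct)
    case base
    then show ?case using su tv by auto
  next
    case (step j)
    then have "enat j \<le> m s t" by (meson Suc_n_not_le_n enat_ord_simps(1) nle_le order_trans)
    then obtain y1 y2 where y1: "cox_eq w (alt_word j s t @ y1)" "reduced (alt_word j s t @ y1)"
      and y2: "cox_eq w (alt_word j t s @ y2)" "reduced (alt_word j t s @ y2)"
      using step.IH by blast
    show ?case
      using left_descent_alt_word_step[OF w st(1,2) su y2 st(3) step.prems]
        left_descent_alt_word_step[OF w st(2,1) tv y1 st(3)[symmetric]] step.prems m_sym[OF st(1,2)]
      by auto
  qed
  show ?thesis
  proof (cases "m s t")
    case (enat n)
    have "2 \<le> m s t" using m_ge2 st by simp
    then have "1 \<le> n" using enat by (simp add: one_enat_def numeral_eq_enat)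
    then show ?thesis using both[of n] enat by auto
  next
    case infinity
    then obtain z where "cox_eq w (alt_word (Suc (length w)) s t @ z)"
      "reduced (alt_word (Suc (length w)) s t @ z)"
      using both[of "Suc (length w)"] by auto
    then show ?thesis using reduced_length_eq[OF w] by fastforce
  qed
qed

lemma distinct_first_letters:
  assumes su: "reduced (s # u)" and tv: "reduced (t # v)" and eq: "cox_eq (s # u) (t # v)" and st: "s \<noteq> t"
  obtains n z where "m s t = enat (Suc n)"
    "cox_eq u (alt_word n t s @ z)" "reduced (alt_word n t s @ z)"
    "cox_eq v (alt_word n s t @ z)" "reduced (alt_word n s t @ z)"
proof -
  have sS: "s \<in> S" and tS: "t \<in> S" using reduced_lists[OF su] reduced_lists[OF tv] by auto
  obtain k z where k: "m s t = enat k" and ez: "cox_eq (s # u) (alt_word k s t @ z)"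
    and rz: "reduced (alt_word k s t @ z)"
    using two_left_descents[OF su sS tS st cong_cl.refl su eq tv] by blast
  obtain n where n: "k = Suc n"
    using m_ge2[OF sS tS st] k by (cases k) (auto simp: numeral_eq_enat)
  have braid: "cox_eq (alt_word k s t @ z) (alt_word k t s @ z)"
    using cong_cl_append[OF cox_eq_braid[OF sS tS k] cong_cl.refl] .
  have "cox_eq u (alt_word n t s @ z)"
    using cox_eq_cancel_left[of "[s]" u "alt_word n t s @ z"] ez n sS by simp
  moreover have "reduced (alt_word n t s @ z)"
    using rz n reduced_appendD[of "[s]" "alt_word n t s @ z"] by simp
  moreover have "cox_eq (t # v) (alt_word k t s @ z)" using eq ez braid by (meson cong_cl.sym cong_cl.trans)
  then have "cox_eq v (alt_word n s t @ z)"
    using cox_eq_cancel_left[of "[t]" v "alt_word n s t @ z"] n tS by simp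
  moreover have "reduced (alt_word n s t @ z)"
    using reduced_cox_eq[OF rz braid] n reduced_appendD[of "[t]" "alt_word n s t @ z"] by simp
  ultimately show ?thesis using that k n by blast
qed

theorem matsumoto: "reduced u \<Longrightarrow> reduced v \<Longrightarrow> cox_eq u v \<Longrightarrow> braid_eq u v"
proof (induction "length u" arbitrary: u v rule: less_induct)
  case less
  show ?case
  proof (cases u)
    case Nil
    then show ?thesis using reduced_length_eq[OF less.prems] by (simp add: cong_cl.refl)
  next
    case (Cons s u')
    then obtain t v' where v: "v = t # v'" using reduced_length_eq[OF less.prems] by (cases v) auto
    have sS: "s \<in> S" using reduced_lists[OF less.prems(1)] Cons by simp
    have ru': "reduced u'" using reduced_appendD[of "[s]" u'] less.prems Cons by simp
    have rv': "reduced v'" using reduced_appendD[of "[t]" v'] less.prems v by simp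
    have lens: "length v' = length u'" using reduced_length_eq[OF less.prems] Cons v by simp
    show ?thesis
    proof (cases "s = t")
      case True
      then have "cox_eq u' v'" using cox_eq_cancel_left[of "[s]" u' v'] less.prems(3) Cons v sS by simp
      then show ?thesis using less.hyps[OF _ ru' rv'] cong_cl_Cons Cons v True by simp
    next
      case False
      then obtain n z where n: "m s t = enat (Suc n)"
        and u': "cox_eq u' (alt_word n t s @ z)" "reduced (alt_word n t s @ z)"
        and v': "cox_eq v' (alt_word n s t @ z)" "reduced (alt_word n s t @ z)"
        using distinct_first_letters less.prems Cons v by metis
      have "braid_eq u (alt_word (Suc n) s t @ z)"
        using less.hyps[OF _ ru' u'(2,1)] Cons cong_cl_Cons by fastforce
      moreover have "braid_eq v (alt_word (Suc n) t s @ z)"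
        using less.hyps[OF _ rv' v'(2,1)] Cons lens v cong_cl_Cons by fastforce
      moreover have "braid_rel (alt_word (Suc n) s t) (alt_word (Suc n) t s)"
        using less.prems v sS False n reduced_lists unfolding braid_rel_def by (metis Cons_in_lists_iff)
      then have "braid_eq (alt_word (Suc n) s t @ z) (alt_word (Suc n) t s @ z)"
        by (rule cong_cl_append[OF cong_cl_rel cong_cl.refl])
      ultimately show ?thesis by (meson cong_cl.sym cong_cl.trans)
    qed
  qed
qed

end

text \<open>\<open>K\<close> is a set of generators whose squares may be cancelled; for generators outside \<open>K\<close>
  every finite braid relation is even, so braid moves preserve their number of occurrences.\<close>
locale coxeter_system_even_outside = coxeter_system S m for S :: "'g set" and m +
  fixes K :: "'g set"
  assumes K_subset: "K \<subseteq> S"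
    and even_outside: "a \<in> S - K \<Longrightarrow> b \<in> S \<Longrightarrow> a \<noteq> b \<Longrightarrow> m a b = enat n \<Longrightarrow> even n"
begin

definition braid_square_rel :: "'g list \<Rightarrow> 'g list \<Rightarrow> bool" where
  "braid_square_rel u v \<longleftrightarrow> braid_rel u v \<or> (\<exists>s\<in>K. u = [s, s] \<and> v = [])"

abbreviation braid_square_eq :: "'g list \<Rightarrow> 'g list \<Rightarrow> bool" where
  "braid_square_eq \<equiv> cong_cl braid_square_rel"

definition at_most_once_outside :: "'g list \<Rightarrow> bool" where
  "at_most_once_outside w \<longleftrightarrow> (\<forall>a \<in> S - K. count_list w a \<le> 1)"

lemma braid_rel_count: "braid_rel u v \<Longrightarrow> c \<in> S - K \<Longrightarrow> count_list u c = count_list v c"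
proof -
  assume "braid_rel u v" and c: "c \<in> S - K"
  then obtain a b n where ab: "a \<in> S" "b \<in> S" "a \<noteq> b" "m a b = enat n"
    and u: "u = alt_word n a b" and v: "v = alt_word n b a"
    unfolding braid_rel_def by blast
  consider "c = a" | "c = b" | "c \<noteq> a" "c \<noteq> b" by blast
  then show ?thesis
  proof cases
    case 1
    then have "even n" using even_outside[of a b n] ab c by blast
    then show ?thesis using u v 1 count_alt_word_fst[OF ab(3), of n] count_alt_word_snd[of b a n] ab(3)
      by (auto elim!: evenE)
  next
    case 2
    then have "even n" using even_outside[of b a n] ab c m_sym by metis
    then show ?thesis using u v 2 count_alt_word_fst[of b a n] count_alt_word_snd[OF ab(3), of n] ab(3)
      by (auto elim!: evenE)
  next
    case 3
    then show ?thesis using u v count_alt_word_other by metis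
  qed
qed

lemma braid_eq_count: "braid_eq u v \<Longrightarrow> c \<in> S - K \<Longrightarrow> count_list u c = count_list v c"
  by (induction rule: cong_cl.induct) (auto simp: braid_rel_count)

lemma braid_eq_imp_braid_square_eq: "braid_eq u v \<Longrightarrow> braid_square_eq u v"
  by (erule cong_cl_mono) (simp add: braid_square_rel_def cong_cl_rel)

lemma not_reduced_split:
  "u \<in> lists S \<Longrightarrow> \<not> reduced u \<Longrightarrow> \<exists>r s p. u = r @ s # p \<and> reduced p \<and> \<not> reduced (s # p)"
proof (induction u)
  case (Cons c u')
  show ?case
  proof (cases "reduced u'")
    case True then show ?thesis using Cons.prems by (metis append_Nil)
  next
    case False
    then show ?thesis using Cons by (metis append_Cons Cons_in_lists_iff)
  qed
qed (simp add: reduced_def)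

lemma braid_eq_left_multiple:
  assumes rp: "reduced p" and sS: "s \<in> S" and nr: "\<not> reduced (s # p)"
  obtains p' where "braid_eq p (s # p')" "cox_eq p (s # p')" "length p = Suc (length p')"
proof -
  obtain y s' z where p: "p = y @ s' # z" and e: "cox_eq (s # y) (y @ [s'])"
    using exchange_condition[OF rp sS nr] by blast
  have ep: "cox_eq p (s # y @ z)" using cox_eq_swap[OF e] p by simp
  then have "braid_eq p (s # y @ z)" using matsumoto[OF rp _ ep] reduced_cox_eq[OF rp ep] p by simp
  then show ?thesis using that ep p by simp
qed

text \<open>Reduction by the exchange condition: a cancellation \<open>ss\<close> is only ever needed for \<open>s \<in> K\<close>,
  since a generator outside \<open>K\<close> occurring once cannot occur twice after braid moves.\<close>
lemma reduce_at_most_once_outside: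
  "u \<in> lists S \<Longrightarrow> at_most_once_outside u
    \<Longrightarrow> \<exists>u'. reduced u' \<and> cox_eq u u' \<and> braid_square_eq u u'"
proof (induction "length u" arbitrary: u rule: less_induct)
  case less
  show ?case
  proof (cases "reduced u")
    case True then show ?thesis by (auto intro: cong_cl.refl)
  next
    case False
    then obtain r s p where u: "u = r @ s # p" and rp: "reduced p" and nr: "\<not> reduced (s # p)"
      using not_reduced_split less.prems by blast
    have sS: "s \<in> S" using less.prems u by simp
    obtain p' where Bp: "braid_eq p (s # p')" and ep: "cox_eq p (s # p')" and len: "length p = Suc (length p')"
      using braid_eq_left_multiple[OF rp sS nr] by blast
    have count: "count_list p a = count_list (s # p') a" if "a \<in> S - K" for a
      using braid_eq_count[OF Bp that] .
    show ?thesis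
    proof (cases "s \<in> K")
      case False
      then have "count_list u s \<ge> 2" using u count[of s] sS by simp
      moreover have "count_list u s \<le> 1"
        using less.prems(2) False sS unfolding at_most_once_outside_def by blast
      ultimately show ?thesis by simp
    next
      case True
      let ?v = "r @ p'"
      have "braid_square_eq u (r @ s # s # p')"
        using cong_cl_ctx[OF braid_eq_imp_braid_square_eq[OF Bp], of "r @ [s]" "[]"] u by simp
      moreover have "braid_square_eq (r @ s # s # p') ?v"
        using True cong_cl.base[of braid_square_rel "[s,s]" "[]" r p'] by (simp add: braid_square_rel_def)
      moreover have "cox_eq u (r @ s # s # p')" using cong_cl_ctx[OF ep, of "r @ [s]" "[]"] u by simp
      moreover have "cox_eq (r @ s # s # p') ?v" using cox_eq_square_ctx[OF sS] .
      moreover obtain v' where "reduced v'" "cox_eq ?v v'" "braid_square_eq ?v v'"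
      proof -
        have "?v \<in> lists S" using less.prems(1) u cox_eq_lists_iff[OF ep] by simp
        moreover have "count_list ?v a \<le> count_list u a" if "a \<in> S - K" for a
          using u count[OF that] by simp
        then have "at_most_once_outside ?v"
          using less.prems(2) unfolding at_most_once_outside_def by (meson order_trans)
        moreover have "length ?v < length u" using u len by simp
        ultimately show ?thesis using less.hyps that by blast
      qed
      ultimately show ?thesis by (meson cong_cl.trans)
    qed
  qed
qed

theorem tits_word_problem:
  assumes "u \<in> lists S" "v \<in> lists S" "at_most_once_outside u" "at_most_once_outside v" "cox_eq u v"
  shows "braid_square_eq u v"
proof -
  obtain u' where u': "reduced u'" "cox_eq u u'" "braid_square_eq u u'"
    using reduce_at_most_once_outside assms by blast
  obtain v' where v': "reduced v'" "cox_eq v v'" "braid_square_eq v v'"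
    using reduce_at_most_once_outside assms by blast
  have "cox_eq u' v'" using u' v' assms by (meson cong_cl.sym cong_cl.trans)
  then have "braid_square_eq u' v'" using braid_eq_imp_braid_square_eq matsumoto u' v' by blast
  then show ?thesis using u' v' by (meson cong_cl.sym cong_cl.trans)
qed

end

section \<open>Products of two reflections\<close>

text \<open>If \<open>X = \<alpha>\<^sub>i\<^sup>\<or>(\<mu>)\<close> and \<open>Y = \<alpha>\<^sub>j\<^sup>\<or>(\<mu>)\<close>, then \<open>r\<^sub>i r\<^sub>j (\<mu> + U \<alpha>\<^sub>i + W \<alpha>\<^sub>j) = \<mu> + U' \<alpha>\<^sub>i + W' \<alpha>\<^sub>j\<close>
  with \<open>(U', W') = rank2_step p q X Y (U, W)\<close>, where \<open>p = \<alpha>\<^sub>i\<^sup>\<or>(\<alpha>\<^sub>j)\<close> and \<open>q = \<alpha>\<^sub>j\<^sup>\<or>(\<alpha>\<^sub>i)\<close>.\<close>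
fun rank2_step :: "complex \<Rightarrow> complex \<Rightarrow> complex \<Rightarrow> complex \<Rightarrow> complex \<times> complex \<Rightarrow> complex \<times> complex"
  where "rank2_step p q X Y (U, W) = (let W' = - Y - q * U - W in (- X - U - p * W', W'))"

text \<open>The same recursion with \<open>X = Y = 0\<close>, over the integers.\<close>
fun rank2_int_step :: "int \<Rightarrow> int \<Rightarrow> int \<times> int \<Rightarrow> int \<times> int" where
  "rank2_int_step p q (x, y) = ((p * q - 1) * x + p * y, - q * x - y)"

definition rank2_order :: "int \<Rightarrow> enat" where
  "rank2_order n = (if n = 0 then 2 else if n = 1 then 3 else if n = 2 then 4 else if n = 3 then 6 else \<infinity>)"

lemma rank2_finite_cases:
  fixes p q :: int
  assumes "p \<le> 0" "q \<le> 0" "p = 0 \<longleftrightarrow> q = 0" "rank2_order (p * q) = enat k"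
  shows "(p, q, k) \<in> {(0, 0, 2), (-1, -1, 3), (-1, -2, 4), (-2, -1, 4), (-1, -3, 6), (-3, -1, 6)}"
proof (cases "p = 0")
  case False
  then have neg: "p \<le> -1" "q \<le> -1" using assms(1-3) by auto
  then have "- p \<le> p * q" "- q \<le> p * q"
    using mult_nonpos_nonpos[of p "q + 1"] mult_nonpos_nonpos[of "p + 1" q] by (auto simp: algebra_simps)
  moreover have "p * q \<le> 3" using assms(4) by (auto simp: rank2_order_def split: if_splits)
  ultimately have "p = -1 \<or> p = -2 \<or> p = -3" "q = -1 \<or> q = -2 \<or> q = -3" using neg by auto
  then show ?thesis using assms(4) by (elim disjE) (simp_all add: rank2_order_def numeral_eq_enat)
qed (use assms in \<open>auto simp: rank2_order_def numeral_eq_enat\<close>)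

lemma rank2_step_period:
  fixes p q :: int
  assumes "p \<le> 0" "q \<le> 0" "p = 0 \<longleftrightarrow> q = 0" "rank2_order (p * q) = enat k"
  shows "(rank2_step (of_int p) (of_int q) X Y ^^ k) (0, 0) = (0, 0)"
  using rank2_finite_cases[OF assms] by (elim insertE emptyE) (simp_all add: numeral_eq_Suc Let_def algebra_simps)

lemma rank2_int_step_no_smaller_period:
  fixes p q :: int
  assumes "p \<le> 0" "q \<le> 0" "p = 0 \<longleftrightarrow> q = 0" "rank2_order (p * q) = enat k" "0 < d" "d < k"
  shows "(rank2_int_step p q ^^ d) (1, 0) \<noteq> (1, 0)"
  using rank2_finite_cases[OF assms(1-4)] assms(5,6)
  by (elim insertE emptyE) (auto simp: less_Suc_eq numeral_eq_Suc)

text \<open>For \<open>p q \<ge> 4\<close> the first coordinate satisfies \<open>x\<^sub>n\<^sub>+\<^sub>2 = (p q - 2) x\<^sub>n\<^sub>+\<^sub>1 - x\<^sub>n\<close> and so grows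
  strictly.\<close>
lemma rank2_int_step_aperiodic:
  fixes p q :: int
  assumes pq: "4 \<le> p * q" and d: "0 < d"
  shows "(rank2_int_step p q ^^ d) (1, 0) \<noteq> (1, 0)"
proof -
  let ?x = "\<lambda>n. fst ((rank2_int_step p q ^^ n) (1, 0))"
  have rec: "?x (Suc (Suc n)) = (p * q - 2) * ?x (Suc n) - ?x n" for n
    by (cases "(rank2_int_step p q ^^ n) (1, 0)") (simp add: algebra_simps)
  have grow: "1 \<le> ?x n \<and> ?x n < ?x (Suc n)" for n
  proof (induction n)
    case (Suc n)
    have "2 * ?x (Suc n) \<le> (p * q - 2) * ?x (Suc n)"
      using Suc pq by (intro mult_right_mono) auto
    then show ?case using Suc.IH rec[of n] by linarith
  qed (use pq in simp)
  obtain d' where "d = Suc d'" using d by (cases d) auto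
  then have "1 < ?x d" using grow[of d'] by simp
  then show ?thesis by auto
qed

locale reflection_pair = module sc for sc :: "complex \<Rightarrow> 'v::ab_group_add \<Rightarrow> 'v" +
  fixes ci cj :: "'v \<Rightarrow> complex" and ai aj :: 'v and p q :: int
  assumes ci_add: "ci (x + y) = ci x + ci y" and ci_scale: "ci (sc a x) = a * ci x"
    and cj_add: "cj (x + y) = cj x + cj y" and cj_scale: "cj (sc a x) = a * cj x"
    and ci_ai: "ci ai = 2" and cj_aj: "cj aj = 2" and ci_aj: "ci aj = of_int p" and cj_ai: "cj ai = of_int q"
begin

definition rot :: "'v \<Rightarrow> 'v" where
  "rot = (\<lambda>x. x - sc (ci x) ai) \<circ> (\<lambda>x. x - sc (cj x) aj)"

lemma rot_coords:
  "rot (\<mu> + sc U ai + sc W aj) = \<mu> + sc (fst (rank2_step p q (ci \<mu>) (cj \<mu>) (U, W))) ai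
    + sc (snd (rank2_step p q (ci \<mu>) (cj \<mu>) (U, W))) aj"
proof -
  let ?W' = "- cj \<mu> - of_int q * U - W"
  let ?U' = "- ci \<mu> - U - of_int p * ?W'"
  have cj_val: "cj (\<mu> + sc U ai + sc W aj) = cj \<mu> + of_int q * U + 2 * W"
    by (simp add: cj_add cj_scale cj_aj cj_ai)
  have "(\<mu> + sc U ai + sc W aj) - sc (cj (\<mu> + sc U ai + sc W aj)) aj
      = \<mu> + sc U ai + (sc W aj - sc (cj \<mu> + of_int q * U + 2 * W) aj)"
    unfolding cj_val by (simp add: algebra_simps)
  also have "\<dots> = \<mu> + sc U ai + sc ?W' aj"
    by (simp only: scale_left_diff_distrib[symmetric]) (simp add: algebra_simps)
  finally have j: "(\<mu> + sc U ai + sc W aj) - sc (cj (\<mu> + sc U ai + sc W aj)) aj = \<mu> + sc U ai + sc ?W' aj" .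
  have ci_val: "ci (\<mu> + sc U ai + sc ?W' aj) = ci \<mu> + 2 * U + of_int p * ?W'"
    by (simp only: ci_add ci_scale ci_ai ci_aj) simp
  have "(\<mu> + sc U ai + sc ?W' aj) - sc (ci (\<mu> + sc U ai + sc ?W' aj)) ai
      = \<mu> + (sc U ai - sc (ci \<mu> + 2 * U + of_int p * ?W') ai) + sc ?W' aj"
    unfolding ci_val by (simp add: algebra_simps)
  also have "\<dots> = \<mu> + sc ?U' ai + sc ?W' aj"
    by (simp only: scale_left_diff_distrib[symmetric]) (simp add: algebra_simps)
  finally have i: "(\<mu> + sc U ai + sc ?W' aj) - sc (ci (\<mu> + sc U ai + sc ?W' aj)) ai
      = \<mu> + sc ?U' ai + sc ?W' aj" .
  have "rank2_step p q (ci \<mu>) (cj \<mu>) (U, W) = (?U', ?W')" by (simp add: Let_def)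
  then show ?thesis unfolding rot_def comp_def j i by simp
qed

lemma rot_pow_coords:
  "(rot ^^ n) (\<mu> + sc U ai + sc W aj) = \<mu> + sc (fst ((rank2_step p q (ci \<mu>) (cj \<mu>) ^^ n) (U, W))) ai
    + sc (snd ((rank2_step p q (ci \<mu>) (cj \<mu>) ^^ n) (U, W))) aj"
proof (induction n)
  case (Suc n)
  then show ?case
    using rot_coords[of \<mu> "fst ((rank2_step p q (ci \<mu>) (cj \<mu>) ^^ n) (U, W))"
        "snd ((rank2_step p q (ci \<mu>) (cj \<mu>) ^^ n) (U, W))"]
    by simp
qed simp

lemma rot_pow_eq_id: "(\<And>X Y. (rank2_step p q X Y ^^ n) (0, 0) = (0, 0)) \<Longrightarrow> rot ^^ n = id"
  using rot_pow_coords[of n _ 0 0] by (simp add: fun_eq_iff)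

lemma rot_pow_ai:
  "(rot ^^ n) ai = sc (of_int (fst ((rank2_int_step p q ^^ n) (1, 0)))) ai
    + sc (of_int (snd ((rank2_int_step p q ^^ n) (1, 0)))) aj"
proof -
  have int: "(rank2_step p q 0 0 ^^ n) (of_int x, of_int y) =
      (of_int (fst ((rank2_int_step p q ^^ n) (x, y))), of_int (snd ((rank2_int_step p q ^^ n) (x, y))))"
    for x y
  proof (induction n)
    case (Suc n)
    obtain a b where "(rank2_int_step p q ^^ n) (x, y) = (a, b)" by fastforce
    with Suc show ?case by (simp add: Let_def algebra_simps)
  qed simp
  have "ci 0 = 0" "cj 0 = 0" using ci_scale[of 0 0] cj_scale[of 0 0] by auto
  then show ?thesis using rot_pow_coords[of n 0 1 0] int[of 1 0] by simp
qed

end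

locale independent_reflection_pair = reflection_pair +
  assumes independent: "sc c1 ai + sc c2 aj = 0 \<Longrightarrow> c1 = 0 \<and> c2 = 0"
begin

lemma rot_pow_neq_id: "(rank2_int_step p q ^^ n) (1, 0) \<noteq> (1, 0) \<Longrightarrow> rot ^^ n \<noteq> id"
proof
  assume ne: "(rank2_int_step p q ^^ n) (1, 0) \<noteq> (1, 0)" and id: "rot ^^ n = id"
  obtain x y where xy: "(rank2_int_step p q ^^ n) (1, 0) = (x, y)" by fastforce
  have "sc (of_int x) ai + sc (of_int y) aj = ai" using rot_pow_ai[of n] id xy by simp
  then have "sc (of_int x - 1) ai + sc (of_int y) aj = 0" by (simp add: algebra_simps)
  then have "of_int x - (1::complex) = 0" "(of_int y :: complex) = 0" using independent by blast+
  then show False using ne xy by simp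
qed

theorem map_order_rot:
  assumes pq: "p \<le> 0" "q \<le> 0" "p = 0 \<longleftrightarrow> q = 0"
  shows "map_order rot = rank2_order (p * q)"
proof (cases "rank2_order (p * q)")
  case (enat k)
  have "k \<noteq> 0" using rank2_finite_cases[OF pq enat] by auto
  moreover have period: "rot ^^ k = id"
    using rot_pow_eq_id rank2_step_period[OF pq enat] by blast
  moreover have "k \<le> d" if "0 < d" "rot ^^ d = id" for d
    using rot_pow_neq_id rank2_int_step_no_smaller_period[OF pq enat] that not_le by blast
  ultimately have "(LEAST d. d > 0 \<and> (rot ^^ d) = id) = k"
    by (intro Least_equality) auto
  then show ?thesis unfolding map_order_def using period \<open>k \<noteq> 0\<close> enat by auto
next
  case infinity
  then have "p < 0" "q < 0" using pq by (auto simp: rank2_order_def)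
  then have "4 \<le> p * q" using infinity mult_neg_neg[of p q] by (auto simp: rank2_order_def split: if_splits)
  then have "\<not> (\<exists>d>0. (rot ^^ d) = id)" using rank2_int_step_aperiodic rot_pow_neq_id by blast
  then show ?thesis unfolding map_order_def using infinity by simp
qed

end

definition word_action :: "('g \<Rightarrow> 'x \<Rightarrow> 'x) \<Rightarrow> 'g list \<Rightarrow> 'x \<Rightarrow> 'x" where
  "word_action g w = foldr (\<lambda>a f. g a \<circ> f) w id"

lemma word_action_Nil [simp]: "word_action g [] = id"
  and word_action_Cons [simp]: "word_action g (a # w) = g a \<circ> word_action g w"
  by (simp_all add: word_action_def)

lemma word_action_append: "word_action g (u @ v) = word_action g u \<circ> word_action g v"
  by (induction u) auto

lemma word_action_alt_word: "word_action g (alt_word (2 * d) a b) = (g a \<circ> g b) ^^ d"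
proof (induction d)
  case (Suc d)
  have "alt_word (2 * Suc d) a b = a # b # alt_word (2 * d) a b" by (simp add: numeral_eq_Suc)
  then show ?case using Suc by (simp add: comp_assoc)
qed simp

lemma word_action_coxeter_rel:
  assumes "cong_cl (coxeter_rel S m) u v"
    and rel: "\<And>a b k. a \<in> S \<Longrightarrow> b \<in> S \<Longrightarrow> m a b = enat k \<Longrightarrow> (g a \<circ> g b) ^^ k = id"
  shows "word_action g u = word_action g v"
  using assms(1)
proof (induction rule: cong_cl.induct)
  case (base u v xs ys)
  then show ?case
    using rel by (auto simp: coxeter_rel_def concat_replicate_eq_alt_word word_action_alt_word word_action_append)
qed auto

lemma alt_word_nontrivial_if_action:
  assumes "\<And>a b k. a \<in> S \<Longrightarrow> b \<in> S \<Longrightarrow> m a b = enat k \<Longrightarrow> (g a \<circ> g b) ^^ k = id"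
    and "(g a \<circ> g b) ^^ d \<noteq> id"
  shows "\<not> cong_cl (coxeter_rel S m) (alt_word (2 * d) a b) []"
proof
  assume "cong_cl (coxeter_rel S m) (alt_word (2 * d) a b) []"
  then have "word_action g (alt_word (2 * d) a b) = word_action g []"
    using word_action_coxeter_rel assms(1) by blast
  then show False using assms(2) by (simp add: word_action_alt_word)
qed

section \<open>A geometric representation\<close>

text \<open>On a pair of generators of \<open>\<frakW>\<close>, \<open>geom_form A a b * geom_form A b a\<close> is \<open>a\<^sub>i\<^sub>j a\<^sub>j\<^sub>i\<close> if
  both are real, and otherwise \<open>0\<close> or \<open>4\<close> according as they commute or are free; so the
  reflections \<open>geom_refl A\<close> realise the Coxeter matrix of \<open>\<frakW>\<close>.\<close>
definition geom_form :: "('i \<Rightarrow> 'i \<Rightarrow> int) \<Rightarrow> 'i \<times> nat \<Rightarrow> 'i \<times> nat \<Rightarrow> int" where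
  "geom_form A a b = (if a = b then 2
     else if A (fst a) (fst a) = 2 \<and> A (fst b) (fst b) = 2 then A (fst a) (fst b)
     else if A (fst a) (fst b) = 0 then 0 else -2)"

definition geom_refl :: "('i \<Rightarrow> 'i \<Rightarrow> int) \<Rightarrow> 'i \<times> nat \<Rightarrow> ('i \<times> nat \<Rightarrow> complex) \<Rightarrow> ('i \<times> nat \<Rightarrow> complex)" where
  "geom_refl A a f = (\<lambda>t. f t - f a * of_int (geom_form A a t))"

lemma geom_reflection_pair:
  "reflection_pair (\<lambda>c f t. c * f t) (\<lambda>f. f a) (\<lambda>f. f b)
     (\<lambda>t. of_int (geom_form A a t)) (\<lambda>t. of_int (geom_form A b t)) (geom_form A b a) (geom_form A a b)"
  by unfold_locales (auto simp: fun_eq_iff algebra_simps geom_form_def)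

lemma geom_refl_pair_pow_eq_id:
  assumes "\<And>X Y. (rank2_step (of_int (geom_form A b a)) (of_int (geom_form A a b)) X Y ^^ k) (0, 0) = (0, 0)"
  shows "(geom_refl A a \<circ> geom_refl A b) ^^ k = id"
proof -
  interpret reflection_pair "\<lambda>c f t. c * f t" "\<lambda>f. f a" "\<lambda>f. f b"
    "\<lambda>t. of_int (geom_form A a t)" "\<lambda>t. of_int (geom_form A b t)" "geom_form A b a" "geom_form A a b"
    by (rule geom_reflection_pair)
  have "rot = geom_refl A a \<circ> geom_refl A b" by (auto simp: rot_def geom_refl_def fun_eq_iff)
  then show ?thesis using rot_pow_eq_id assms by metis
qed

lemma geom_refl_pair_neq_id: "a \<noteq> b \<Longrightarrow> geom_refl A a \<circ> geom_refl A b \<noteq> id"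
proof
  assume "a \<noteq> b" and "geom_refl A a \<circ> geom_refl A b = id"
  then have "(geom_refl A a \<circ> geom_refl A b) (\<lambda>t. if t = a then 1 else 0) a = 1" by simp
  then show False using \<open>a \<noteq> b\<close> by (simp add: geom_refl_def geom_form_def)
qed

lemma geom_refl_pair_pow_unbounded:
  assumes ne: "a \<noteq> b" and form: "geom_form A a b = -2" "geom_form A b a = -2"
  shows "((geom_refl A a \<circ> geom_refl A b) ^^ d) (\<lambda>t. if t = b then 1 else 0) b = 2 * of_nat d + 1"
proof -
  let ?F = "geom_refl A a \<circ> geom_refl A b"
  have diag: "geom_form A x x = 2" for x by (simp add: geom_form_def)
  have Fa: "?F g a = - (g a + 2 * g b)" and Fb: "?F g b = 2 * g a + 3 * g b" for g
    using form ne by (auto simp: geom_refl_def diag algebra_simps)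
  have "(?F ^^ d) (\<lambda>t. if t = b then 1 else 0) a = - 2 * of_nat d
     \<and> (?F ^^ d) (\<lambda>t. if t = b then 1 else 0) b = 2 * of_nat d + 1"
  proof (induction d)
    case (Suc d)
    have step: "(?F ^^ Suc d) (\<lambda>t. if t = b then 1 else 0) = ?F ((?F ^^ d) (\<lambda>t. if t = b then 1 else 0))"
      by simp
    show ?case unfolding step Fa Fb using Suc.IH by (simp add: algebra_simps comp_def)
  qed (use ne in simp)
  then show ?thesis ..
qed

locale bc_realisation =
  fixes A :: "'i \<Rightarrow> 'i \<Rightarrow> int"
    and scale :: "complex \<Rightarrow> 'v::ab_group_add \<Rightarrow> 'v"
    and alpha :: "'i \<Rightarrow> 'v"
    and coroot :: "'i \<Rightarrow> 'v \<Rightarrow> complex"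
  assumes borcherds_cartan: "borcherds_cartan A"
    and vector_space: "vector_space scale"
    and linear_coroot: "\<forall>i. Vector_Spaces.linear scale (*) (coroot i)"
    and coroot_alpha: "\<forall>i j. coroot i (alpha j) = of_int (A i j)"
    and inj_alpha: "inj alpha"
    and independent_alpha: "\<not> module.dependent scale (range alpha)"
begin

abbreviation ord :: "'i \<Rightarrow> 'i \<Rightarrow> enat" where
  "ord \<equiv> rr_order scale alpha coroot"

abbreviation reflection :: "'i \<Rightarrow> 'v \<Rightarrow> 'v" where
  "reflection \<equiv> srefl scale alpha coroot"

sublocale module scale
  using vector_space by (simp add: module_iff_vector_space)

lemma coroot_add: "coroot i (x + y) = coroot i x + coroot i y"
  and coroot_scale: "coroot i (scale a x) = a * coroot i x"
  using linear_coroot unfolding Vector_Spaces.linear_def module_hom_def module_hom_axioms_def by auto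

lemma A_offdiag_nonpos: "i \<noteq> j \<Longrightarrow> A i j \<le> 0"
  and A_zero_sym: "A i j = 0 \<longleftrightarrow> A j i = 0"
  using borcherds_cartan unfolding borcherds_cartan_def by auto

lemma alpha_pair_independent:
  assumes ij: "i \<noteq> j" and h: "scale c1 (alpha i) + scale c2 (alpha j) = 0"
  shows "c1 = 0 \<and> c2 = 0"
proof -
  have ne: "alpha i \<noteq> alpha j" using inj_alpha ij by (meson injD)
  let ?u = "\<lambda>v. if v = alpha i then c1 else c2"
  have sum: "(\<Sum>v\<in>{alpha i, alpha j}. scale (?u v) v) = 0" using ne h by simp
  have "\<forall>T\<subseteq>range alpha. finite T \<longrightarrow> (\<forall>u. (\<Sum>v\<in>T. scale (u v) v) = 0 \<longrightarrow> (\<forall>v\<in>T. u v = 0))"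
    using independent_alpha vector_space.independent_explicit_finite_subsets[OF vector_space] by simp
  from this[rule_format, of "{alpha i, alpha j}" ?u] have "\<forall>v\<in>{alpha i, alpha j}. ?u v = 0"
    using sum by blast
  then show ?thesis using ne by auto
qed

lemma coroot_diff: "coroot i (x - y) = coroot i x - coroot i y"
  using coroot_add[of i "x - y" y] by simp

lemma reflection_involutive: "A i i = 2 \<Longrightarrow> reflection i \<circ> reflection i = id"
  by (auto simp: fun_eq_iff srefl_def coroot_diff coroot_scale coroot_alpha
      scale_left_diff_distrib[symmetric])

lemma independent_reflection_pair_alpha:
  "i \<noteq> j \<Longrightarrow> A i i = 2 \<Longrightarrow> A j j = 2 \<Longrightarrow>
    independent_reflection_pair scale (coroot i) (coroot j) (alpha i) (alpha j) (A i j) (A j i)"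
  by unfold_locales (use coroot_add coroot_scale coroot_alpha alpha_pair_independent in auto)

lemma ord_real:
  assumes "i \<noteq> j" "A i i = 2" "A j j = 2"
  shows "ord i j = rank2_order (A i j * A j i)"
proof -
  interpret independent_reflection_pair scale "coroot i" "coroot j" "alpha i" "alpha j" "A i j" "A j i"
    using independent_reflection_pair_alpha[OF assms] .
  have "ord i j = map_order rot"
    unfolding rr_order_def rot_def srefl_def by (simp add: comp_def)
  then show ?thesis using map_order_rot A_offdiag_nonpos A_zero_sym assms by simp
qed

lemma ord_real_finite_cases:
  assumes "i \<noteq> j" "A i i = 2" "A j j = 2" "ord i j = enat k"
  shows "(A i j, A j i, k) \<in> {(0, 0, 2), (-1, -1, 3), (-1, -2, 4), (-2, -1, 4), (-1, -3, 6), (-3, -1, 6)}"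
  using rank2_finite_cases[of "A i j" "A j i" k] ord_real[OF assms(1-3)] assms A_offdiag_nonpos A_zero_sym
  by simp

lemma ord_real_sym: "i \<noteq> j \<Longrightarrow> A i i = 2 \<Longrightarrow> A j j = 2 \<Longrightarrow> ord i j = ord j i"
  using ord_real by (metis mult.commute)

lemma ord_real_ge2: "i \<noteq> j \<Longrightarrow> A i i = 2 \<Longrightarrow> A j j = 2 \<Longrightarrow> 2 \<le> ord i j"
  using ord_real[of i j] unfolding rank2_order_def by (auto simp: numeral_eq_enat)

lemma reflection_pair_pow_ord:
  assumes "ord i j = enat k"
  shows "(reflection i \<circ> reflection j) ^^ k = id"
proof -
  let ?T = "reflection i \<circ> reflection j"
  have "\<exists>d>0. (?T ^^ d) = id" and "k = (LEAST d. d > 0 \<and> (?T ^^ d) = id)"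
    using assms unfolding rr_order_def map_order_def by (auto split: if_splits)
  then show ?thesis using LeastI_ex by (metis (mono_tags, lifting))
qed

lemma reflection_pair_pow_neq_id:
  assumes "0 < d" "enat d < ord i j"
  shows "(reflection i \<circ> reflection j) ^^ d \<noteq> id"
proof
  assume "(reflection i \<circ> reflection j) ^^ d = id"
  then have "ord i j \<le> enat d"
    using assms(1) unfolding rr_order_def map_order_def by (auto intro: Least_le)
  then show False using assms(2) by simp
qed

lemma tilde_I_real: "a \<in> tilde_I A \<Longrightarrow> A (fst a) (fst a) = 2 \<Longrightarrow> a = (fst a, 1)"
  unfolding tilde_I_def by auto

lemma tilde_I_real_fst_neq:
  "a \<in> tilde_I A \<Longrightarrow> b \<in> tilde_I A \<Longrightarrow> a \<noteq> b \<Longrightarrow> A (fst a) (fst a) = 2 \<Longrightarrow> A (fst b) (fst b) = 2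
    \<Longrightarrow> fst a \<noteq> fst b"
  using tilde_I_real by metis

lemma cox_mat_finite_cases:
  assumes ab: "a \<in> tilde_I A" "b \<in> tilde_I A" "a \<noteq> b" and k: "cox_mat A ord a b = enat k"
  obtains (real) "A (fst a) (fst a) = 2" "A (fst b) (fst b) = 2" "fst a \<noteq> fst b" "ord (fst a) (fst b) = enat k"
    | (commuting) "\<not> (A (fst a) (fst a) = 2 \<and> A (fst b) (fst b) = 2)" "k = 2"
        "A (fst a) (fst b) = 0" "A (fst b) (fst a) = 0"
proof (cases "A (fst a) (fst a) = 2 \<and> A (fst b) (fst b) = 2")
  case True
  then show ?thesis using real tilde_I_real_fst_neq[OF ab] k ab(3) unfolding cox_mat_def by simp
next
  case False
  then show ?thesis using commuting k ab(3) A_zero_sym unfolding cox_mat_def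
    by (auto split: if_splits simp: numeral_eq_enat)
qed

lemma cox_mat_sym: "a \<in> tilde_I A \<Longrightarrow> b \<in> tilde_I A \<Longrightarrow> cox_mat A ord a b = cox_mat A ord b a"
  using tilde_I_real_fst_neq[of a b] ord_real_sym[of "fst a" "fst b"] A_zero_sym[of "fst a" "fst b"]
  unfolding cox_mat_def by auto

lemma cox_mat_ge2: "a \<in> tilde_I A \<Longrightarrow> b \<in> tilde_I A \<Longrightarrow> a \<noteq> b \<Longrightarrow> 2 \<le> cox_mat A ord a b"
  using tilde_I_real_fst_neq[of a b] ord_real_ge2[of "fst a" "fst b"] unfolding cox_mat_def by auto

definition reflection_action :: "'i \<times> nat \<Rightarrow> 'v \<Rightarrow> 'v" where
  "reflection_action a = (if A (fst a) (fst a) = 2 then reflection (fst a) else id)"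

lemma reflection_action_rel:
  assumes ab: "a \<in> tilde_I A" "b \<in> tilde_I A" and k: "cox_mat A ord a b = enat k"
  shows "(reflection_action a \<circ> reflection_action b) ^^ k = id"
proof (cases "a = b")
  case True
  then show ?thesis using k reflection_involutive[of "fst a"] by (simp add: cox_mat_def reflection_action_def one_enat_def)
next
  case False
  from ab False k show ?thesis
  proof (cases rule: cox_mat_finite_cases)
    case real
    then show ?thesis using reflection_pair_pow_ord by (simp add: reflection_action_def)
  next
    case commuting
    then have "reflection_action a = id \<or> reflection_action b = id" by (auto simp: reflection_action_def)
    moreover have "(reflection_action a \<circ> reflection_action b) ^^ k = reflection_action a \<circ> reflection_action b \<circ> (reflection_action a \<circ> reflection_action b)"
      using commuting by (simp add: numeral_eq_Suc)
    ultimately show ?thesis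
      using reflection_involutive[of "fst a"] reflection_involutive[of "fst b"] by (auto simp: comp_assoc reflection_action_def)
  qed
qed

lemma geom_refl_rel:
  assumes ab: "a \<in> tilde_I A" "b \<in> tilde_I A" and k: "cox_mat A ord a b = enat k"
  shows "(geom_refl A a \<circ> geom_refl A b) ^^ k = id"
proof (cases "a = b")
  case True
  then show ?thesis using k by (auto simp: cox_mat_def one_enat_def geom_refl_def geom_form_def fun_eq_iff)
next
  case False
  from ab False k show ?thesis
  proof (cases rule: cox_mat_finite_cases)
    case real
    then have "geom_form A a b = A (fst a) (fst b)" "geom_form A b a = A (fst b) (fst a)"
      using False by (auto simp: geom_form_def)
    then show ?thesis
      using real rank2_step_period[of "A (fst b) (fst a)" "A (fst a) (fst b)" k] ord_real[of "fst a" "fst b"]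
        A_offdiag_nonpos A_zero_sym
      by (intro geom_refl_pair_pow_eq_id) (simp add: mult.commute)
  next
    case commuting
    then have "geom_form A a b = 0" "geom_form A b a = 0" using False by (auto simp: geom_form_def)
    then show ?thesis using commuting rank2_step_period[of 0 0 2]
      by (intro geom_refl_pair_pow_eq_id) (simp add: rank2_order_def numeral_eq_enat)
  qed
qed

lemma cox_mat_alt_word_nontrivial:
  assumes ab: "a \<in> tilde_I A" "b \<in> tilde_I A" "a \<noteq> b" and d: "0 < d" "enat d < cox_mat A ord a b"
  shows "\<not> cong_cl (coxeter_rel (tilde_I A) (cox_mat A ord)) (alt_word (2 * d) a b) []"
proof (cases "A (fst a) (fst a) = 2 \<and> A (fst b) (fst b) = 2")
  case True
  then have "cox_mat A ord a b = ord (fst a) (fst b)" using ab(3) by (simp add: cox_mat_def)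
  then have "(reflection_action a \<circ> reflection_action b) ^^ d \<noteq> id"
    using True reflection_pair_pow_neq_id[of d "fst a" "fst b"] d unfolding reflection_action_def by simp
  then show ?thesis
    using alt_word_nontrivial_if_action[of "tilde_I A" "cox_mat A ord" reflection_action, OF reflection_action_rel] by blast
next
  case not_real: False
  have "(geom_refl A a \<circ> geom_refl A b) ^^ d \<noteq> id"
  proof (cases "A (fst a) (fst b) = 0")
    case True
    then have "cox_mat A ord a b = 2" using not_real ab(3) A_zero_sym by (auto simp: cox_mat_def)
    then have "d = 1" using d by (simp add: numeral_eq_enat)
    then show ?thesis using geom_refl_pair_neq_id[OF ab(3)] by simp
  next
    case False
    then have "geom_form A a b = -2" "geom_form A b a = -2"
      using not_real ab(3) A_zero_sym by (auto simp: geom_form_def)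
    note unbounded = geom_refl_pair_pow_unbounded[OF ab(3) this, of d]
    show ?thesis
    proof
      assume "(geom_refl A a \<circ> geom_refl A b) ^^ d = id"
      with unbounded have "(1::complex) = 2 * of_nat d + 1" by simp
      then show False using d by simp
    qed
  qed
  then show ?thesis
    using alt_word_nontrivial_if_action[of "tilde_I A" "cox_mat A ord" "geom_refl A", OF geom_refl_rel] by blast
qed

end

sublocale bc_realisation \<subseteq> coxeter: coxeter_system_even_outside "tilde_I A" "cox_mat A ord" "{(i, 1) | i. A i i = 2}"
proof unfold_locales
  show "cox_mat A ord a a = 1" for a by (simp add: cox_mat_def)
  show "cox_mat A ord a b = cox_mat A ord b a" if "a \<in> tilde_I A" "b \<in> tilde_I A" for a b
    using cox_mat_sym that .
  show "2 \<le> cox_mat A ord a b" if "a \<in> tilde_I A" "b \<in> tilde_I A" "a \<noteq> b" for a b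
    using cox_mat_ge2 that .
  show "\<not> cong_cl (coxeter_rel (tilde_I A) (cox_mat A ord)) (alt_word (2 * d) a b) []"
    if "a \<in> tilde_I A" "b \<in> tilde_I A" "a \<noteq> b" "0 < d" "enat d < cox_mat A ord a b" for a b d
    using cox_mat_alt_word_nontrivial that .
  show "{(i, 1) | i. A i i = 2} \<subseteq> tilde_I A" by (auto simp: tilde_I_def)
  fix a b n assume a: "a \<in> tilde_I A - {(i, 1) | i. A i i = 2}" and b: "b \<in> tilde_I A" and ne: "a \<noteq> b"
    and n: "cox_mat A ord a b = enat n"
  have "A (fst a) (fst a) \<noteq> 2" using a tilde_I_real[of a] by auto
  moreover have "a \<in> tilde_I A" using a by simp
  from this b ne n show "even n" by (cases rule: cox_mat_finite_cases) (use calculation in auto)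
qed

section \<open>The ordered index\<close>

text \<open>The offset \<open>c\<close> accounts for the letters to the right of a factor of a word.\<close>
fun ordered_index_from :: "('i \<Rightarrow> 'i \<Rightarrow> int) \<Rightarrow> ('i \<Rightarrow> nat) \<Rightarrow> 'i list \<Rightarrow> ('i \<times> nat) list" where
  "ordered_index_from A c [] = []"
| "ordered_index_from A c (x # xs) =
     (x, if A x x = 2 then 1 else c x + count_list (x # xs) x) # ordered_index_from A c xs"

lemma ordered_index_Cons:
  "ordered_index A (x # xs) = (x, if A x x = 2 then 1 else count_list (x # xs) x) # ordered_index A xs"
proof -
  have "[0..<length (x # xs)] = 0 # map Suc [0..<length xs]"
    using map_Suc_upt[of 0 "length xs"] upt_conv_Cons[of 0 "Suc (length xs)"] by simp
  then show ?thesis unfolding ordered_index_def by simp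
qed

lemma ordered_index_eq_from: "ordered_index A xs = ordered_index_from A (\<lambda>_. 0) xs"
  by (induction xs) (auto simp: ordered_index_Cons, simp add: ordered_index_def)

lemma ordered_index_from_append:
  "ordered_index_from A c (xs @ ys) = ordered_index_from A (\<lambda>i. c i + count_list ys i) xs @ ordered_index_from A c ys"
  by (induction xs) auto

lemma ordered_index_from_cong:
  "(\<And>i. A i i \<noteq> 2 \<Longrightarrow> c i = c' i) \<Longrightarrow> ordered_index_from A c xs = ordered_index_from A c' xs"
  by (induction xs) auto

lemma map_fst_ordered_index_from [simp]: "map fst (ordered_index_from A c xs) = xs"
  by (induction xs) auto

lemma ordered_index_from_real:
  "(\<And>x. x \<in> set w \<Longrightarrow> A x x = 2) \<Longrightarrow> ordered_index_from A c w = map (\<lambda>x. (x, 1)) w"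
  by (induction w) auto

lemma ordered_index_from_in_lists: "ordered_index_from A c xs \<in> lists (tilde_I A)"
  by (induction xs) (auto simp: tilde_I_def)

lemma ordered_index_from_label_le:
  "(i, n) \<in> set (ordered_index_from A c xs) \<Longrightarrow> A i i \<noteq> 2 \<Longrightarrow> n \<le> c i + count_list xs i"
  by (induction xs) auto

lemma count_ordered_index_from_imag:
  "A (fst a) (fst a) \<noteq> 2 \<Longrightarrow> count_list (ordered_index_from A c xs) a \<le> 1"
proof (induction xs)
  case (Cons x xs)
  show ?case
  proof (cases "a = (x, if A x x = 2 then 1 else c x + count_list (x # xs) x)")
    case True
    then have "a \<notin> set (ordered_index_from A c xs)"
      using ordered_index_from_label_le[of x _ A c xs] Cons.prems by fastforce
    then show ?thesis using True by (simp add: count_list_0_iff)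
  next
    case False then show ?thesis using Cons by auto
  qed
qed simp

context bc_realisation
begin

lemma C_rel_eq_coxeter_rel: "C_rel A ord = coxeter_rel (tilde_I A) (cox_mat A ord)"
  by (simp add: fun_eq_iff C_rel_def coxeter_rel_def)

lemma at_most_once_outside_ordered_index_from:
  "coxeter.at_most_once_outside (ordered_index_from A c xs)"
  unfolding coxeter.at_most_once_outside_def
  using count_ordered_index_from_imag tilde_I_real by (metis (mono_tags, lifting) DiffE mem_Collect_eq)

lemma W_rel_cases:
  assumes "W_rel A ord u v"
  obtains (square) i where "A i i = 2" "u = [i, i]" "v = []"
    | (braid) i j m where "i \<noteq> j" "A i i = 2" "A j j = 2" "ord i j = enat m"
        "u = alt_word (2 * m) i j \<or> u = alt_word (2 * m) j i" "v = []"
    | (commute) i j where "A i i \<noteq> 2" "j \<noteq> i" "A i j = 0"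
        "(u = [i, j] \<and> v = [j, i]) \<or> (u = [j, i] \<and> v = [i, j])"
  using assms unfolding W_rel_def concat_replicate_eq_alt_word by blast

lemma W_rel_count_imag:
  assumes "W_rel A ord u v" "A i i \<noteq> 2"
  shows "count_list u i = count_list v i"
  using assms(1)
proof (cases rule: W_rel_cases)
  case (braid x y m)
  then have "i \<notin> set u" using assms(2) set_alt_word[of "2 * m" x y] set_alt_word[of "2 * m" y x] by auto
  then show ?thesis using braid by (simp add: count_list_0_iff)
qed (use assms(2) in auto)

lemma W_rel_ordered_index_from:
  assumes "W_rel A ord u v"
  shows "coxeter.cox_eq (ordered_index_from A c u) (ordered_index_from A c v)"
  using assms
proof (cases rule: W_rel_cases)
  case (square i)
  moreover have "(i, 1) \<in> tilde_I A" using square unfolding tilde_I_def by auto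
  ultimately show ?thesis using coxeter.cox_eq_square by simp
next
  case (braid i j m)
  have tI: "(i, 1) \<in> tilde_I A" "(j, 1) \<in> tilde_I A" using braid unfolding tilde_I_def by auto
  have m: "cox_mat A ord (i, 1) (j, 1) = enat m" "cox_mat A ord (j, 1) (i, 1) = enat m"
    using braid ord_real_sym by (simp_all add: cox_mat_def)
  have "ordered_index_from A c (alt_word (2 * m) x y) = alt_word (2 * m) (x, 1) (y, 1)"
    if "x \<in> {i, j}" "y \<in> {i, j}" for x y
    using ordered_index_from_real[of "alt_word (2 * m) x y" A c] set_alt_word[of "2 * m" x y] braid that
    by (auto simp: map_alt_word)
  then show ?thesis
    using braid coxeter.cox_eq_alt_word[OF tI m(1)] coxeter.cox_eq_alt_word[OF tI(2,1) m(2)] by auto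
next
  case (commute i j)
  let ?a = "(i, c i + 1)" and ?b = "(j, if A j j = 2 then 1 else c j + 1)"
  have tI: "?a \<in> tilde_I A" "?b \<in> tilde_I A" using commute unfolding tilde_I_def by auto
  have "cox_mat A ord ?a ?b = enat 2" using commute by (simp add: cox_mat_def numeral_eq_enat)
  then have "coxeter.cox_eq [?a, ?b] [?b, ?a]"
    using coxeter.cox_eq_braid[OF tI] by (simp add: numeral_eq_Suc)
  then show ?thesis using commute cong_cl.sym by auto
qed

lemma ordered_index_from_cong_cl:
  "cong_cl (W_rel A ord) u v \<Longrightarrow> coxeter.cox_eq (ordered_index_from A c u) (ordered_index_from A c v)"
proof (induction arbitrary: c rule: cong_cl.induct)
  case (base u v xs ys)
  have "ordered_index_from A (\<lambda>i. c i + count_list (u @ ys) i) xs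
      = ordered_index_from A (\<lambda>i. c i + count_list (v @ ys) i) xs"
    using W_rel_count_imag[OF base(1)] by (intro ordered_index_from_cong) simp
  then show ?case
    using cong_cl_ctx[OF W_rel_ordered_index_from[OF base(1)]] by (simp add: ordered_index_from_append)
qed (auto intro: cong_cl.intros)

lemma braid_square_rel_W_rel:
  assumes "coxeter.braid_square_rel u v"
  shows "cong_cl (W_rel A ord) (map fst u) (map fst v)"
  using assms unfolding coxeter.braid_square_rel_def
proof (elim disjE bexE)
  fix s assume "s \<in> {(i, 1) | i. A i i = 2}" "u = [s, s] \<and> v = []"
  then show ?thesis by (intro cong_cl_rel) (auto simp: W_rel_def)
next
  assume "coxeter.braid_rel u v"
  then obtain a b n where ab: "a \<in> tilde_I A" "b \<in> tilde_I A" "a \<noteq> b" "cox_mat A ord a b = enat n"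
    and uv: "map fst u = alt_word n (fst a) (fst b)" "map fst v = alt_word n (fst b) (fst a)"
    unfolding coxeter.braid_rel_def by (auto simp: map_alt_word)
  from ab show ?thesis
  proof (cases rule: cox_mat_finite_cases)
    case real
    then have "n \<in> {2, 3, 4, 6}" using ord_real_finite_cases by fastforce
    then have "cong_cl (W_rel A ord) (alt_word (2 * n) (fst a) (fst b)) []"
      using real by (intro cong_cl_rel) (auto simp: W_rel_def concat_replicate_eq_alt_word)
    moreover have "cong_cl (W_rel A ord) [fst a, fst a] []" "cong_cl (W_rel A ord) [fst b, fst b] []"
      using real by (auto intro!: cong_cl_rel simp: W_rel_def)
    ultimately show ?thesis using uv cong_cl_braid by metis
  next
    case commuting
    then have uv2: "map fst u = [fst a, fst b]" "map fst v = [fst b, fst a]"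
      using uv by (simp_all add: numeral_eq_Suc)
    show ?thesis
    proof (cases "fst a = fst b")
      case False
      then have "W_rel A ord [fst a, fst b] [fst b, fst a]"
        using commuting unfolding W_rel_def by metis
      then show ?thesis using uv2 cong_cl_rel by metis
    qed (simp add: uv2 cong_cl.refl)
  qed
qed

lemma cong_cl_of_ordered_index_cong_cl:
  assumes "coxeter.cox_eq (ordered_index A xs) (ordered_index A ys)"
  shows "cong_cl (W_rel A ord) xs ys"
proof -
  have "coxeter.braid_square_eq (ordered_index_from A (\<lambda>_. 0) xs) (ordered_index_from A (\<lambda>_. 0) ys)"
    using coxeter.tits_word_problem[OF ordered_index_from_in_lists ordered_index_from_in_lists
        at_most_once_outside_ordered_index_from at_most_once_outside_ordered_index_from] assms
    by (simp add: ordered_index_eq_from)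
  then show ?thesis using cong_cl_map[of _ _ _ _ fst] braid_square_rel_W_rel by fastforce
qed

end

lemma bij_betw_induced:
  assumes "\<And>x y. F x = F y \<longleftrightarrow> G x = G y"
  shows "\<exists>\<sigma>. (\<forall>x. \<sigma> (F x) = G x) \<and> bij_betw \<sigma> (range F) (range G)"
proof -
  define \<sigma> where "\<sigma> X = G (SOME x. F x = X)" for X
  have \<sigma>: "\<sigma> (F x) = G x" for x
  proof -
    have "F (SOME y. F y = F x) = F x" by (rule someI[of _ x]) simp
    then show ?thesis unfolding \<sigma>_def using assms by blast
  qed
  have "inj_on \<sigma> (range F)"
  proof (rule inj_onI)
    fix X Y assume "X \<in> range F" "Y \<in> range F" "\<sigma> X = \<sigma> Y"
    then show "X = Y" using \<sigma> assms by auto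
  qed
  moreover have "\<sigma> ` range F = range G" using \<sigma> by (auto simp: image_image)
  ultimately show ?thesis using \<sigma> by (auto simp: bij_betw_def)
qed

lemma cong_cl_class_eq_iff:
  assumes "u \<in> L" "v \<in> L"
  shows "{w. w \<in> L \<and> cong_cl R u w} = {w. w \<in> L \<and> cong_cl R v w} \<longleftrightarrow> cong_cl R u v"
  using assms by (auto intro: cong_cl.refl cong_cl.sym cong_cl.trans)

context bc_realisation
begin

lemma W_class_eq_iff: "W_class A ord xs = W_class A ord ys \<longleftrightarrow> cong_cl (W_rel A ord) xs ys"
  using cong_cl_class_eq_iff[of xs UNIV ys] by (simp add: W_class_def)

lemma C_class_ordered_index_eq_iff:
  "C_class A ord (ordered_index A xs) = C_class A ord (ordered_index A ys) \<longleftrightarrow> cong_cl (W_rel A ord) xs ys"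
proof -
  have "C_class A ord (ordered_index A xs) = C_class A ord (ordered_index A ys)
      \<longleftrightarrow> coxeter.cox_eq (ordered_index A xs) (ordered_index A ys)"
    unfolding C_class_def C_rel_eq_coxeter_rel ordered_index_eq_from
    by (intro cong_cl_class_eq_iff ordered_index_from_in_lists)
  then show ?thesis
    using cong_cl_of_ordered_index_cong_cl ordered_index_from_cong_cl[of xs ys "\<lambda>_. 0"]
    by (auto simp: ordered_index_eq_from)
qed

theorem ordered_index_bij_betw:
  "\<exists>\<sigma>. (\<forall>xs. \<sigma> (W_class A ord xs) = C_class A ord (ordered_index A xs))
       \<and> bij_betw \<sigma> (W_monoid A ord) (V_set A ord)"
proof -
  have "V_set A ord = range (\<lambda>xs. C_class A ord (ordered_index A xs))" by (auto simp: V_set_def)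
  then show ?thesis
    using bij_betw_induced[of "W_class A ord" "\<lambda>xs. C_class A ord (ordered_index A xs)"]
      W_class_eq_iff C_class_ordered_index_eq_iff
    by (simp add: W_monoid_def)
qed

end

theorem lemma2p2p5:
  fixes A :: "'i::countable \<Rightarrow> 'i \<Rightarrow> int"
    and scale :: "complex \<Rightarrow> 'v::ab_group_add \<Rightarrow> 'v"
    and alpha :: "'i \<Rightarrow> 'v"
    and coroot :: "'i \<Rightarrow> 'v \<Rightarrow> complex"
  defines "ord \<equiv> rr_order scale alpha coroot"
  assumes "borcherds_cartan A"
    and "vector_space scale"
    and "\<forall>i. Vector_Spaces.linear scale (*) (coroot i)"
    and "\<forall>i j. coroot i (alpha j) = of_int (A i j)"
    and "inj alpha"
    and "\<not> module.dependent scale (range alpha)"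
  shows "\<exists>\<sigma>. (\<forall>xs. \<sigma> (W_class A ord xs) = C_class A ord (ordered_index A xs))
            \<and> bij_betw \<sigma> (W_monoid A ord) (V_set A ord)"
proof -
  interpret bc_realisation A scale alpha coroot
    using assms(2-7) by (simp add: bc_realisation_def)
  show ?thesis unfolding ord_def by (rule ordered_index_bij_betw)
qed

end
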